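(* Let $J_2=\langle a_1,b_1,a_2,b_2\mid [a_1,b_1][a_2,b_2]\rangle$ be the fundamental group of the closed orientable surface of genus $2$, with symmetric generating set $S=\{a_1^{\pm1},b_1^{\pm1},a_2^{\pm1},b_2^{\pm1}\}$. The spectral radius $\mu_2$ of the simple random walk on the Cayley graph $\mathrm{Cay}(J_2,S)$ satisfies $\mu_2\ge 0.6623$.
   Context: For a connected $d$-regular graph with base vertex $*$, the simple random walk moves from a vertex to each of its $d$ neighbours with probability $1/d$; with $p^{(n)}( *,* )$ the probability of returning to $*$ after $n$ steps, the spectral radius is $\mu=\limsup_{n\to\infty}p^{(n)}( *,* )^{1/n}$ (equal to the norm of the Markov operator on $\ell^2$). The Cayley graph has vertex set $J_2$ and edges $\{g,gs\}$, $g\in J_2$, $s\in S$; here it is $8$-regular. $[a,b]=aba^{-1}b^{-1}$. *)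

theory Defs
  imports Complex_Main "HOL-Library.Extended_Real" "HOL-Library.Liminf_Limsup"
begin

datatype gen = A1 | B1 | A2 | B2

text \<open>A letter of the symmetric generating set S: (g, False) is g, (g, True) is g inverse.
  The type has exactly 8 elements, i.e. S is all letters.\<close>
type_synonym letter = "gen \<times> bool"

definition inv_letter :: "letter \<Rightarrow> letter" where
  "inv_letter x = (fst x, \<not> snd x)"

definition relator :: "letter list" where
  "relator = [(A1,False),(B1,False),(A1,True),(B1,True),
              (A2,False),(B2,False),(A2,True),(B2,True)]"

inductive J2_eq :: "letter list \<Rightarrow> letter list \<Rightarrow> bool" where
  refl: "J2_eq w w"
| sym: "J2_eq u v \<Longrightarrow> J2_eq v u"
| trans: "J2_eq u v \<Longrightarrow> J2_eq v w \<Longrightarrow> J2_eq u w"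
| cancel: "J2_eq (u @ [x, inv_letter x] @ v) (u @ v)"
| rel: "J2_eq (u @ relator @ v) (u @ v)"

text \<open>Simple random walk on Cay(J_2,S) started at the identity: after n steps it sits at
  s_1 ... s_n with (s_1,...,s_n) uniform in S^n.  Hence the n-step return probability.\<close>
definition return_prob :: "nat \<Rightarrow> real" where
  "return_prob n = real (card {w :: letter list. length w = n \<and> J2_eq w []}) / 8 ^ n"

definition spectral_radius_J2 :: ereal where
  "spectral_radius_J2 = limsup (\<lambda>n. ereal (root n (return_prob n)))"

end

(* Around every vertex the Cayley graph of J_2 is the 1-skeleton of the tiling of the
   hyperbolic plane by octagons with boundary word [a1,b1][a2,b2], eight of them at each
   vertex. Stacks of sites in fans (some consecutive edges at a vertex and the octagons
   between them) form an 8-regular graph with a reversible action of the letters and a word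
   map into J_2 sending closed walks to relations, so its return counts are at most those of
   J_2. On this graph an integer table certifies a finitely supported product test function
   f with sum_s f (v s) >= lambda f v, where lambda = 5.2985. Some vertex y then receives at
   least lambda^n f v0 / sum f of the walks of length n from v0, and going to y and back
   gives N_2n (v0, v0) >= N_n (v0, y)^2 >= c lambda^2n; hence mu_2 >= lambda / 8 > 0.6623. *)

theory Submission
  imports Defs "HOL-Library.More_List"
begin

section \<open>Words in \<open>J_2\<close>\<close>

declare J2_eq.trans [trans]

lemma J2_eq_append_right: "J2_eq u v \<Longrightarrow> J2_eq (u @ w) (v @ w)"
  by (induction rule: J2_eq.induct) (metis J2_eq.intros append.assoc)+

lemma J2_eq_append_left: "J2_eq u v \<Longrightarrow> J2_eq (w @ u) (w @ v)"
  by (induction rule: J2_eq.induct) (metis J2_eq.intros append.assoc)+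

lemma J2_eq_cancel_last: "J2_eq (u @ [x, inv_letter x]) u"
  using J2_eq.cancel[of u x "[]"] by simp

lemma inv_letter_inv_letter [simp]: "inv_letter (inv_letter x) = x"
  by (simp add: inv_letter_def)

definition inv_word :: "letter list \<Rightarrow> letter list" where
  "inv_word w = rev (map inv_letter w)"

lemma inv_word_Nil [simp]: "inv_word [] = []"
  and inv_word_Cons [simp]: "inv_word (x # w) = inv_word w @ [inv_letter x]"
  and length_inv_word [simp]: "length (inv_word w) = length w"
  by (simp_all add: inv_word_def)

lemma inv_word_inv_word [simp]: "inv_word (inv_word w) = w"
  by (simp add: inv_word_def rev_map comp_def)

lemma J2_eq_append_inv_word: "J2_eq (w @ inv_word w) []"
proof (induction w)
  case Nil
  show ?case by (simp add: J2_eq.refl)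
next
  case (Cons x w)
  have "J2_eq ([x] @ (w @ inv_word w) @ [inv_letter x]) ([x] @ [] @ [inv_letter x])"
    using Cons J2_eq_append_left J2_eq_append_right by blast
  moreover have "J2_eq [x, inv_letter x] []"
    using J2_eq_cancel_last[of "[]"] by simp
  ultimately show ?case
    by (auto intro: J2_eq.trans)
qed

lemma J2_eq_inv_word_append: "J2_eq (inv_word w @ w) []"
  using J2_eq_append_inv_word[of "inv_word w"] by simp

lemma J2_eq_inv_word_if_append_Nil:
  assumes "J2_eq (u @ v) []"
  shows "J2_eq u (inv_word v)"
proof -
  have "J2_eq (u @ v @ inv_word v) u"
    using J2_eq_append_left[OF J2_eq_append_inv_word] by simp
  moreover have "J2_eq ((u @ v) @ inv_word v) (inv_word v)"
    using J2_eq_append_right[OF assms] by simp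
  ultimately show ?thesis
    by (metis J2_eq.sym J2_eq.trans append.assoc)
qed

lemma J2_eq_cancel_left:
  assumes "J2_eq (u @ w) u"
  shows "J2_eq w []"
proof -
  have "J2_eq ((inv_word u @ u) @ w) (inv_word u @ u)"
    using J2_eq_append_left[OF assms] by simp
  moreover have "J2_eq ((inv_word u @ u) @ w) w"
    using J2_eq_append_right[OF J2_eq_inv_word_append] by simp
  ultimately show ?thesis
    by (meson J2_eq.sym J2_eq.trans J2_eq_inv_word_append)
qed

lemma J2_eq_swap_Nil:
  assumes "J2_eq (u @ v) []"
  shows "J2_eq (v @ u) []"
proof -
  have "J2_eq (v @ u) (v @ inv_word v)"
    using J2_eq_append_left[OF J2_eq_inv_word_if_append_Nil[OF assms]] .
  then show ?thesis
    using J2_eq.trans J2_eq_append_inv_word by blast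
qed

lemma J2_eq_rotate_Nil: "J2_eq w [] \<Longrightarrow> J2_eq (rotate n w) []"
  by (simp add: rotate_drop_take J2_eq_swap_Nil)

lemma J2_eq_inv_word_relator: "J2_eq (inv_word relator) []"
  using J2_eq_inv_word_if_append_Nil[of "[]" relator] J2_eq.rel[of "[]" "[]"]
  by (simp add: J2_eq.sym)

section \<open>Octagons at a vertex\<close>

text \<open>In the tiling of the hyperbolic plane by regular octagons with boundary word
  \<open>relator\<close>, the eight edges at a vertex carry the labels \<open>link 0, ..., link 7\<close> in
  cyclic order, and \<open>face_word m\<close> is the boundary of the octagon between the edges
  \<open>link m\<close> and \<open>link (m + 1)\<close>, read from that vertex.\<close>
definition vertex_link :: "letter list" where
  "vertex_link = [(A1,True),(B1,False),(A2,False),(B2,True),(A2,True),(B2,False),(A1,False),(B1,True)]"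

definition link :: "nat \<Rightarrow> letter" where
  "link m = vertex_link ! (m mod 8)"

definition face_word :: "nat \<Rightarrow> letter list" where
  "face_word m = rotate ([7,4,1,2,3,0,5,6] ! (m mod 8)) (inv_word relator)"

fun link_index :: "letter \<Rightarrow> nat" where
  "link_index (A1,True) = 0" | "link_index (B1,False) = 1" | "link_index (A2,False) = 2"
| "link_index (B2,True) = 3" | "link_index (A2,True) = 4" | "link_index (B2,False) = 5"
| "link_index (A1,False) = 6" | "link_index (B1,True) = 7"

lemma mod_8_cases:
  fixes m :: nat
  assumes "list_all P [0,1,2,3,4,5,6,7]"
  shows "P (m mod 8)"
proof -
  have "m mod 8 \<in> set [0..<8]" by simp
  also have "[0..<8] = [0,1,2,3,4,5,6,7::nat]" by (simp add: upt_conv_Cons)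
  finally show ?thesis using assms by (auto simp: list_all_iff)
qed

lemma link_mod [simp]: "link (m mod 8) = link m"
  by (simp add: link_def)

lemma face_word_mod [simp]: "face_word (m mod 8) = face_word m"
  by (simp add: face_word_def)

lemma link_index_less: "link_index t < 8"
  by (cases t rule: link_index.cases) auto

lemma link_link_index [simp]: "link (link_index t) = t"
  by (cases t rule: link_index.cases) (auto simp: link_def vertex_link_def)

lemma link_index_link [simp]: "link_index (link m) = m mod 8"
proof -
  have "list_all (\<lambda>n. link_index (link n) = n) [0,1,2,3,4,5,6,7]"
    by (simp add: link_def vertex_link_def)
  from mod_8_cases[OF this] show ?thesis by simp
qed

lemma J2_eq_face_word: "J2_eq (face_word m) []"
  by (simp add: face_word_def J2_eq_rotate_Nil J2_eq_inv_word_relator)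

lemma length_face_word [simp]: "length (face_word m) = 8"
  by (simp add: face_word_def inv_word_def relator_def)

lemma face_word_nth_0: "face_word m ! 0 = link m"
proof -
  have "list_all (\<lambda>n. face_word n ! 0 = link n) [0,1,2,3,4,5,6,7]"
    by (simp add: face_word_def link_def vertex_link_def inv_word_def relator_def inv_letter_def rotate_drop_take)
  from mod_8_cases[OF this] show ?thesis by simp
qed

lemma face_word_nth_7: "face_word m ! 7 = inv_letter (link (Suc m))"
proof -
  have "list_all (\<lambda>n. face_word n ! 7 = inv_letter (link (Suc n))) [0,1,2,3,4,5,6,7]"
    by (simp add: face_word_def link_def vertex_link_def inv_word_def relator_def inv_letter_def rotate_drop_take)
  from mod_8_cases[OF this] have "face_word m ! 7 = inv_letter (link (Suc (m mod 8)))"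
    by simp
  also have "link (Suc (m mod 8)) = link (Suc m)"
    by (simp add: link_def mod_Suc_eq)
  finally show ?thesis .
qed

lemma J2_eq_take_7_face_word: "J2_eq (take 7 (face_word m)) [link (Suc m)]"
proof -
  have "face_word m = take 7 (face_word m) @ [face_word m ! 7]"
    using take_Suc_conv_app_nth[of 7 "face_word m"] by simp
  then have "J2_eq (take 7 (face_word m) @ [face_word m ! 7]) []"
    using J2_eq_face_word by metis
  then show ?thesis
    using J2_eq_inv_word_if_append_Nil by (fastforce simp: inv_word_def face_word_nth_7)
qed

section \<open>Counting walks\<close>

lemma finite_letter [simp]: "finite (UNIV :: letter set)"
proof -
  have "(UNIV :: gen set) = {A1, B1, A2, B2}"
    using gen.exhaust by blast
  then have "finite (UNIV :: gen set)"
    by (metis finite.emptyI finite.insertI)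
  then show ?thesis
    by (simp add: finite_Prod_UNIV)
qed

locale letter_action =
  fixes V :: "'v set" and move :: "'v \<Rightarrow> letter \<Rightarrow> 'v"
  assumes move_closed: "v \<in> V \<Longrightarrow> move v s \<in> V"
    and move_inv_letter: "v \<in> V \<Longrightarrow> move (move v s) (inv_letter s) = v"
begin

definition walk_count :: "nat \<Rightarrow> 'v \<Rightarrow> 'v \<Rightarrow> nat" where
  "walk_count n v y = card {w. length w = n \<and> foldl move v w = y}"

lemma walk_count_0: "walk_count 0 v y = (if v = y then 1 else 0)"
proof -
  have "{w. length w = 0 \<and> foldl move v w = y} = (if v = y then {[]} else {})"
    by auto
  then show ?thesis
    by (simp add: walk_count_def)
qed

lemma walk_count_Suc: "walk_count (Suc n) v y = (\<Sum>s\<in>UNIV. walk_count n (move v s) y)"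
proof -
  let ?W = "\<lambda>s. {w. length w = n \<and> foldl move (move v s) w = y}"
  have finite_W: "finite (?W s)" for s
    by (rule finite_subset[OF _ finite_lists_length_eq[OF finite_letter, of n]]) auto
  have "{w. length w = Suc n \<and> foldl move v w = y} = (\<Union>s. Cons s ` ?W s)"
    by (auto simp: length_Suc_conv image_iff)
  then have "walk_count (Suc n) v y = card (\<Union>s. Cons s ` ?W s)"
    by (simp add: walk_count_def)
  also have "\<dots> = (\<Sum>s\<in>UNIV. card (Cons s ` ?W s))"
    by (rule card_UN_disjoint) (auto simp: finite_W)
  also have "\<dots> = (\<Sum>s\<in>UNIV. walk_count n (move v s) y)"
    by (simp add: card_image walk_count_def)
  finally show ?thesis .
qed

lemma walk_count_add_ge: "walk_count n v y * walk_count m y z \<le> walk_count (n + m) v z"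
proof (induction n arbitrary: v)
  case 0
  show ?case by (simp add: walk_count_0)
next
  case (Suc n)
  have "walk_count (Suc n) v y * walk_count m y z = (\<Sum>s\<in>UNIV. walk_count n (move v s) y * walk_count m y z)"
    by (simp add: walk_count_Suc sum_distrib_right)
  also have "\<dots> \<le> (\<Sum>s\<in>UNIV. walk_count (n + m) (move v s) z)"
    by (rule sum_mono) (rule Suc.IH)
  finally show ?case by (simp add: walk_count_Suc)
qed

lemma foldl_move_inv_word: "v \<in> V \<Longrightarrow> foldl move (foldl move v w) (inv_word w) = v"
  by (induction w arbitrary: v) (auto simp: move_closed move_inv_letter)

lemma walk_count_sym:
  assumes "v \<in> V" "y \<in> V"
  shows "walk_count n v y = walk_count n y v"
proof -
  have "bij_betw inv_word {w. length w = n \<and> foldl move v w = y} {w. length w = n \<and> foldl move y w = v}"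
    by (rule bij_betw_byWitness[where f' = inv_word])
      (auto simp: foldl_move_inv_word assms)
  then show ?thesis
    unfolding walk_count_def by (rule bij_betw_same_card)
qed

lemma walk_count_weighted_ge:
  fixes f :: "'v \<Rightarrow> real"
  assumes finite_supp: "finite {y. f y \<noteq> 0}" and f_nonneg: "\<And>y. 0 \<le> f y"
    and lam_nonneg: "0 \<le> lam"
    and superharmonic: "\<And>v. v \<in> V \<Longrightarrow> lam * f v \<le> (\<Sum>s\<in>UNIV. f (move v s))"
    and "v \<in> V"
  shows "lam ^ n * f v \<le> (\<Sum>y | f y \<noteq> 0. walk_count n v y * f y)"
  using \<open>v \<in> V\<close>
proof (induction n arbitrary: v)
  case 0
  have "(\<Sum>y | f y \<noteq> 0. walk_count 0 v y * f y) = (\<Sum>y | f y \<noteq> 0. if v = y then f y else 0)"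
    by (rule sum.cong) (auto simp: walk_count_0)
  also have "\<dots> = f v"
    using finite_supp by (simp add: sum.delta)
  finally show ?case by simp
next
  case (Suc n)
  have "lam ^ Suc n * f v = lam ^ n * (lam * f v)"
    by (simp add: mult_ac)
  also have "\<dots> \<le> lam ^ n * (\<Sum>s\<in>UNIV. f (move v s))"
    using superharmonic[OF Suc.prems] lam_nonneg by (simp add: mult_left_mono)
  also have "\<dots> \<le> (\<Sum>s\<in>UNIV. \<Sum>y | f y \<noteq> 0. walk_count n (move v s) y * f y)"
    unfolding sum_distrib_left by (rule sum_mono) (simp add: Suc.IH Suc.prems move_closed)
  also have "\<dots> = (\<Sum>y | f y \<noteq> 0. walk_count (Suc n) v y * f y)"
    by (subst sum.swap) (simp add: walk_count_Suc sum_distrib_right)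
  finally show ?case .
qed

lemma walk_count_ge_average:
  fixes f :: "'v \<Rightarrow> real"
  assumes finite_supp: "finite {y. f y \<noteq> 0}" and f_nonneg: "\<And>y. 0 \<le> f y"
    and lam_nonneg: "0 \<le> lam"
    and superharmonic: "\<And>v. v \<in> V \<Longrightarrow> lam * f v \<le> (\<Sum>s\<in>UNIV. f (move v s))"
    and "v \<in> V" and "0 < f v"
  obtains y where "f y \<noteq> 0" and "lam ^ n * f v / (\<Sum>y | f y \<noteq> 0. f y) \<le> walk_count n v y"
proof -
  let ?S = "{y. f y \<noteq> 0}"
  define T where "T = (\<Sum>y\<in>?S. f y)"
  have "f v \<le> T"
    unfolding T_def using \<open>0 < f v\<close> finite_supp f_nonneg by (intro member_le_sum) auto
  then have "0 < T"
    using \<open>0 < f v\<close> by linarith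
  have "?S \<noteq> {}"
    using \<open>0 < f v\<close> by force
  then have "Max (walk_count n v ` ?S) \<in> walk_count n v ` ?S"
    using finite_supp by simp
  then obtain y where y_Max: "Max (walk_count n v ` ?S) = walk_count n v y" and "y \<in> ?S"
    by (rule imageE)
  have y_max: "walk_count n v z \<le> walk_count n v y" if "z \<in> ?S" for z
    unfolding y_Max[symmetric] using finite_supp that by simp
  have "lam ^ n * f v \<le> (\<Sum>z\<in>?S. walk_count n v z * f z)"
    using walk_count_weighted_ge[OF finite_supp f_nonneg lam_nonneg superharmonic \<open>v \<in> V\<close>] .
  also have "\<dots> \<le> (\<Sum>z\<in>?S. walk_count n v y * f z)"
    by (intro sum_mono mult_right_mono) (simp_all add: y_max f_nonneg)
  also have "\<dots> = walk_count n v y * T"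
    by (simp add: T_def sum_distrib_left)
  finally have "lam ^ n * f v / T \<le> walk_count n v y"
    using \<open>0 < T\<close> by (simp add: divide_le_eq)
  then show ?thesis
    using that \<open>y \<in> ?S\<close> by (simp add: T_def)
qed

lemma walk_count_return_ge:
  fixes f :: "'v \<Rightarrow> real"
  assumes "finite {y. f y \<noteq> 0}" and "\<And>y. 0 \<le> f y" and supp_subset: "{y. f y \<noteq> 0} \<subseteq> V"
    and "0 \<le> lam" and "\<And>v. v \<in> V \<Longrightarrow> lam * f v \<le> (\<Sum>s\<in>UNIV. f (move v s))"
    and "v \<in> V" and "0 < f v"
  shows "(lam ^ n * f v / (\<Sum>y | f y \<noteq> 0. f y)) ^ 2 \<le> walk_count (2 * n) v v"
proof -
  obtain y where "f y \<noteq> 0" and avg: "lam ^ n * f v / (\<Sum>y | f y \<noteq> 0. f y) \<le> walk_count n v y"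
    using walk_count_ge_average[OF assms(1,2,4,5,6,7)] .
  have "walk_count n v y * walk_count n y v \<le> walk_count (2 * n) v v"
    using walk_count_add_ge[of n v y n v] by (simp add: mult_2)
  moreover have "walk_count n y v = walk_count n v y"
    using walk_count_sym \<open>f y \<noteq> 0\<close> supp_subset \<open>v \<in> V\<close> by auto
  ultimately have "walk_count n v y ^ 2 \<le> walk_count (2 * n) v v"
    by (simp add: power2_eq_square)
  then have "real (walk_count n v y) ^ 2 \<le> walk_count (2 * n) v v"
    by (simp only: of_nat_power[symmetric] of_nat_le_iff)
  moreover have "0 \<le> lam ^ n * f v / (\<Sum>y | f y \<noteq> 0. f y)"
    using assms(2,4) by (simp add: sum_nonneg)
  ultimately show ?thesis
    using power_mono[OF avg, of 2] by linarith
qed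

end

locale J2_labelled_action = letter_action V move for V :: "'v set" and move +
  fixes label :: "'v \<Rightarrow> letter list"
  assumes J2_eq_label_move: "v \<in> V \<Longrightarrow> J2_eq (label v @ [s]) (label (move v s))"
begin

lemma J2_eq_label_foldl_move: "v \<in> V \<Longrightarrow> J2_eq (label v @ w) (label (foldl move v w))"
proof (induction w arbitrary: v)
  case Nil
  show ?case by (simp add: J2_eq.refl)
next
  case (Cons s w)
  have "J2_eq (label v @ [s] @ w) (label (move v s) @ w)"
    using J2_eq_append_right[OF J2_eq_label_move[OF Cons.prems]] by simp
  then show ?case
    using Cons.IH[of "move v s"] Cons.prems move_closed by (auto intro: J2_eq.trans)
qed

lemma walk_count_le_return_prob:
  assumes "v \<in> V"
  shows "walk_count n v v / 8 ^ n \<le> return_prob n"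
proof -
  have "J2_eq w []" if "foldl move v w = v" for w
    using J2_eq_cancel_left J2_eq_label_foldl_move[OF assms, of w] that by simp
  then have "{w. length w = n \<and> foldl move v w = v} \<subseteq> {w. length w = n \<and> J2_eq w []}"
    by auto
  moreover have "finite {w :: letter list. length w = n \<and> J2_eq w []}"
    by (rule finite_subset[OF _ finite_lists_length_eq[OF finite_letter, of n]]) auto
  ultimately have "walk_count n v v \<le> card {w. length w = n \<and> J2_eq w []}"
    unfolding walk_count_def by (rule card_mono[rotated])
  then show ?thesis
    unfolding return_prob_def by (simp add: divide_right_mono)
qed

lemma return_prob_ge_test_function:
  fixes f :: "'v \<Rightarrow> real"
  assumes "finite {y. f y \<noteq> 0}" and "\<And>y. 0 \<le> f y" and "{y. f y \<noteq> 0} \<subseteq> V" and "0 \<le> lam"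
    and "\<And>v. v \<in> V \<Longrightarrow> lam * f v \<le> (\<Sum>s\<in>UNIV. f (move v s))"
    and "v \<in> V" and "0 < f v"
  shows "(lam / 8) ^ (2 * n) * (f v / (\<Sum>y | f y \<noteq> 0. f y)) ^ 2 \<le> return_prob (2 * n)"
proof -
  let ?T = "\<Sum>y | f y \<noteq> 0. f y"
  have "(lam / 8) ^ (2 * n) * (f v / ?T) ^ 2 = (lam ^ n * f v / ?T) ^ 2 / 8 ^ (2 * n)"
    by (simp add: power_mult_distrib power_divide power_mult field_simps)
  also have "\<dots> \<le> walk_count (2 * n) v v / 8 ^ (2 * n)"
    using walk_count_return_ge[OF assms] by (simp add: divide_right_mono)
  also have "\<dots> \<le> return_prob (2 * n)"
    using walk_count_le_return_prob[OF \<open>v \<in> V\<close>] .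
  finally show ?thesis .
qed

end

lemma limsup_root_ge:
  fixes p :: "nat \<Rightarrow> real"
  assumes "0 \<le> c" and "0 < C" and lower: "\<And>n. c ^ (2 * n) * C \<le> p (2 * n)"
  shows "ereal c \<le> limsup (\<lambda>n. ereal (root n (p n)))"
proof -
  have "(\<lambda>n. root (2 * n) C) \<longlonglongrightarrow> 1"
    using LIMSEQ_subseq_LIMSEQ[OF LIMSEQ_root_const[OF \<open>0 < C\<close>], of "\<lambda>n. 2 * n"]
    by (simp add: strict_mono_def comp_def)
  then have "(\<lambda>n. ereal (c * root (2 * n) C)) \<longlonglongrightarrow> ereal c"
    using tendsto_mult_left[of _ 1 _ c] by (simp add: lim_ereal)
  then have "ereal c = limsup (\<lambda>n. ereal (c * root (2 * n) C))"
    by (rule lim_imp_Limsup[OF trivial_limit_sequentially, symmetric])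
  also have "\<dots> \<le> limsup (\<lambda>n. ereal (root (2 * n) (p (2 * n))))"
  proof (rule Limsup_mono[OF always_eventually], rule allI)
    fix n
    show "ereal (c * root (2 * n) C) \<le> ereal (root (2 * n) (p (2 * n)))"
    proof (cases "n = 0")
      case False
      then have "c * root (2 * n) C = root (2 * n) (c ^ (2 * n) * C)"
        using \<open>0 \<le> c\<close> by (simp add: real_root_mult real_root_power_cancel)
      then show ?thesis
        using lower[of n] False by (simp add: real_root_le_mono)
    qed simp
  qed
  also have "\<dots> \<le> limsup (\<lambda>n. ereal (root n (p n)))"
    using limsup_subseq_mono[of "\<lambda>n. 2 * n" "\<lambda>n. ereal (root n (p n))"]
    by (simp add: strict_mono_def comp_def)
  finally show ?thesis .
qed

section \<open>Fans of octagons\<close>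

text \<open>A site \<open>(k, r, i, j)\<close> lies in the fan \<open>(k, r)\<close>, made of the spokes \<open>link r, ..., link (r + k)\<close>
  at a centre vertex and the \<open>k\<close> octagons between consecutive spokes. For \<open>j = 0\<close> the site is
  the end of spoke \<open>i\<close>, for \<open>0 < j \<le> 5\<close> the vertex reached from the centre by the first
  \<open>j + 1\<close> letters of \<open>face_word (r + i)\<close>. A state is a stack of sites, each the centre of the
  fan of the next one, starting with the fan \<open>(7, 0)\<close> at the identity.\<close>
type_synonym site = "nat \<times> nat \<times> nat \<times> nat"

datatype move_kind = Inside site | Pop | Push site

definition site_ok :: "site \<Rightarrow> bool" where
  "site_ok e = (case e of (k, r, i, j) \<Rightarrow> ((k = 7 \<and> r = 0) \<or> ((k = 4 \<or> k = 5) \<and> r < 8)) \<and>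
     ((j = 0 \<and> i \<le> k) \<or> (0 < j \<and> j \<le> 5 \<and> i < k)))"

definition fan_of :: "site \<Rightarrow> nat \<times> nat" where
  "fan_of e = (fst e, fst (snd e))"

definition inside_moves :: "site \<Rightarrow> (letter \<times> move_kind) list" where
  "inside_moves e = (case e of (k, r, i, j) \<Rightarrow>
     if j = 0 then [(inv_letter (link (r + i)), Pop)]
       @ (if i < k then [(face_word (r + i) ! 1, Inside (k, r, i, 1))] else [])
       @ (if 0 < i then [(inv_letter (face_word (r + i - 1) ! 6), Inside (k, r, i - 1, 5))] else [])
     else [(face_word (r + i) ! (j + 1), Inside (if j < 5 then (k, r, i, j + 1) else (k, r, i + 1, 0))),
           (inv_letter (face_word (r + i) ! j), Inside (if 1 < j then (k, r, i, j - 1) else (k, r, i, 0)))])"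

definition inside_letters :: "site \<Rightarrow> letter list" where
  "inside_letters e = map fst (inside_moves e)"

definition link_offset :: "nat \<Rightarrow> letter \<Rightarrow> nat" where
  "link_offset r t = (link_index t + 8 - r) mod 8"

definition free_start :: "letter list \<Rightarrow> nat" where
  "free_start U = hd (filter (\<lambda>m. link m \<notin> set U \<and> link (m + 7) \<in> set U) [0..<8])"

definition free_interval :: "letter list \<Rightarrow> nat \<Rightarrow> bool" where
  "free_interval U k = (distinct U \<and> free_start U < 8 \<and>
     list_all (\<lambda>m. (link m \<notin> set U) = ((m + 8 - free_start U) mod 8 \<le> k)) [0..<8])"

definition child_width :: "nat \<Rightarrow> nat \<times> nat \<Rightarrow> nat" where
  "child_width k p = (if snd p = 0 \<and> 0 < fst p \<and> fst p < k then 4 else 5)"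

definition child_fan :: "site \<Rightarrow> nat \<times> nat" where
  "child_fan e = (case e of (k, r, i, j) \<Rightarrow> (child_width k (i, j), free_start (inside_letters e)))"

definition spoke_site :: "nat \<times> nat \<Rightarrow> letter \<Rightarrow> site" where
  "spoke_site B t = (fst B, snd B, link_offset (snd B) t, 0)"

definition site_move :: "site \<Rightarrow> letter \<Rightarrow> move_kind" where
  "site_move e s = (case map_of (inside_moves e) s of Some a \<Rightarrow> a | None \<Rightarrow> Push (spoke_site (child_fan e) s))"

definition interior_letters :: "nat \<Rightarrow> nat \<Rightarrow> letter list" where
  "interior_letters m j = [face_word m ! (j + 1), inv_letter (face_word m ! j)]"

definition spoke_letters :: "nat \<Rightarrow> bool \<Rightarrow> bool \<Rightarrow> letter list" where
  "spoke_letters m a b = [inv_letter (link m)] @ (if a then [face_word m ! 1] else [])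
     @ (if b then [inv_letter (face_word (m + 7) ! 6)] else [])"

lemma free_interval_interior_letters:
  "list_all (\<lambda>m. list_all (\<lambda>j. free_interval (interior_letters m j) 5) [1..<6]) [0..<8]"
  by code_simp

lemma free_interval_spoke_letters:
  "list_all (\<lambda>m. free_interval (spoke_letters m True True) 4 \<and> free_interval (spoke_letters m True False) 5
     \<and> free_interval (spoke_letters m False True) 5) [0..<8]"
  by code_simp

lemma inside_letters_spoke:
  "inside_letters (k, r, i, 0) = spoke_letters ((r + i) mod 8) (i < k) (0 < i)"
proof -
  have "face_word (r + i - 1) = face_word ((r + i) mod 8 + 7)" if "0 < i"
  proof -
    have "r + i - 1 + 8 = r + i + 7"
      using that by simp
    then have "(r + i - 1) mod 8 = (r + i + 7) mod 8"
      by (metis mod_add_self2)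
    also have "\<dots> = ((r + i) mod 8 + 7) mod 8"
      by (simp add: mod_add_left_eq)
    finally show ?thesis
      by (metis face_word_mod)
  qed
  then show ?thesis
    by (auto simp: inside_letters_def inside_moves_def spoke_letters_def)
qed

lemma inside_letters_interior:
  "0 < j \<Longrightarrow> inside_letters (k, r, i, j) = interior_letters ((r + i) mod 8) j"
  by (simp add: inside_letters_def inside_moves_def interior_letters_def)

lemma free_interval_inside_letters:
  assumes "site_ok e"
  shows "free_interval (inside_letters e) (fst (child_fan e))"
proof -
  obtain k r i j where e: "e = (k, r, i, j)"
    by (cases e)
  have "(r + i) mod 8 < 8"
    by simp
  show ?thesis
  proof (cases "j = 0")
    case True
    then have "0 < i \<or> i < k"
      using assms by (auto simp: e site_ok_def)
    moreover have "fst (child_fan e) = (if 0 < i \<and> i < k then 4 else 5)"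
      by (simp add: child_fan_def child_width_def e True)
    ultimately show ?thesis
      using free_interval_spoke_letters \<open>(r + i) mod 8 < 8\<close>
      by (auto simp: list_all_iff e True inside_letters_spoke)
  next
    case False
    then have "j \<in> set [1..<6]"
      using assms by (auto simp: e site_ok_def)
    moreover have "fst (child_fan e) = 5"
      by (simp add: child_fan_def child_width_def e False)
    ultimately show ?thesis
      using free_interval_interior_letters \<open>(r + i) mod 8 < 8\<close>
      by (auto simp: list_all_iff e False inside_letters_interior)
  qed
qed

lemma site_ok_child_fan:
  assumes "site_ok e"
  shows "fst (child_fan e) = 4 \<or> fst (child_fan e) = 5" and "snd (child_fan e) < 8"
proof -
  show "fst (child_fan e) = 4 \<or> fst (child_fan e) = 5"
    by (cases e) (simp add: child_fan_def child_width_def)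
  show "snd (child_fan e) < 8"
    using free_interval_inside_letters[OF assms] by (cases e) (simp add: free_interval_def child_fan_def)
qed

lemma link_add_link_offset:
  assumes "r < 8"
  shows "link (r + link_offset r t) = t"
proof -
  have "(r + link_offset r t) mod 8 = (r + (link_index t + 8 - r)) mod 8"
    by (simp add: link_offset_def mod_add_right_eq)
  also have "\<dots> = link_index t"
    using assms link_index_less[of t] by simp
  finally show ?thesis
    by (metis link_mod link_link_index)
qed

lemma link_offset_link:
  assumes "r < 8" and "i < 8"
  shows "link_offset r (link (r + i)) = i"
proof -
  have "(r + i) mod 8 + 8 - r = (r + i) mod 8 + (8 - r)"
    using assms(1) by simp
  then have "((r + i) mod 8 + 8 - r) mod 8 = ((r + i) + (8 - r)) mod 8"
    by (simp add: mod_add_left_eq)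
  also have "\<dots> = i"
    using assms by simp
  finally show ?thesis
    by (simp add: link_offset_def)
qed

lemma notin_inside_letters_iff:
  assumes "site_ok e"
  shows "t \<notin> set (inside_letters e) \<longleftrightarrow> link_offset (snd (child_fan e)) t \<le> fst (child_fan e)"
proof -
  have interval: "list_all (\<lambda>m. (link m \<notin> set (inside_letters e)) =
      ((m + 8 - free_start (inside_letters e)) mod 8 \<le> fst (child_fan e))) [0..<8]"
    using free_interval_inside_letters[OF assms] by (simp add: free_interval_def)
  have "(t \<notin> set (inside_letters e)) =
      ((link_index t + 8 - free_start (inside_letters e)) mod 8 \<le> fst (child_fan e))"
    using bspec[OF interval[unfolded list_all_iff], of "link_index t"] link_index_less[of t] by simp
  moreover have "snd (child_fan e) = free_start (inside_letters e)"
    by (cases e) (simp add: child_fan_def)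
  ultimately show ?thesis
    by (simp add: link_offset_def)
qed

lemma site_move_inside: "site_ok e \<Longrightarrow> (s, a) \<in> set (inside_moves e) \<Longrightarrow> site_move e s = a"
  using free_interval_inside_letters
  by (simp add: site_move_def free_interval_def inside_letters_def map_of_is_SomeI)

lemma site_move_outside:
  assumes "s \<notin> set (inside_letters e)"
  shows "site_move e s = Push (spoke_site (child_fan e) s)"
proof -
  have "map_of (inside_moves e) s = None"
    using assms by (simp add: inside_letters_def map_of_eq_None_iff)
  then show ?thesis
    by (simp add: site_move_def)
qed

lemma site_move_InsideD: "site_move e s = Inside e' \<Longrightarrow> (s, Inside e') \<in> set (inside_moves e)"
  and site_move_PopD: "site_move e s = Pop \<Longrightarrow> (s, Pop) \<in> set (inside_moves e)"
  by (auto simp: site_move_def split: option.splits dest: map_of_SomeD)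

lemma site_move_PushD:
  assumes "site_move e s = Push e'"
  shows "s \<notin> set (inside_letters e)" and "e' = spoke_site (child_fan e) s"
proof -
  have "(s, Push e') \<notin> set (inside_moves e)"
    by (cases e) (auto simp: inside_moves_def)
  then show "s \<notin> set (inside_letters e)" and "e' = spoke_site (child_fan e) s"
    using assms by (auto simp: site_move_def inside_letters_def map_of_eq_None_iff
        split: option.splits dest: map_of_SomeD)
qed

lemma Pop_in_inside_moves_iff:
  "(s, Pop) \<in> set (inside_moves (k, r, i, j)) \<longleftrightarrow> j = 0 \<and> s = inv_letter (link (r + i))"
  by (auto simp: inside_moves_def)

lemma Inside_in_inside_moves_cases:
  assumes "site_ok (k, r, i, j)" and "(s, Inside e') \<in> set (inside_moves (k, r, i, j))"
  shows "(j = 0 \<and> i < k \<and> s = face_word (r + i) ! 1 \<and> e' = (k, r, i, 1))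
    \<or> (j = 0 \<and> 0 < i \<and> s = inv_letter (face_word (r + i - 1) ! 6) \<and> e' = (k, r, i - 1, 5))
    \<or> (0 < j \<and> j < 5 \<and> s = face_word (r + i) ! (j + 1) \<and> e' = (k, r, i, j + 1))
    \<or> (j = 5 \<and> s = face_word (r + i) ! 6 \<and> e' = (k, r, i + 1, 0))
    \<or> (1 < j \<and> s = inv_letter (face_word (r + i) ! j) \<and> e' = (k, r, i, j - 1))
    \<or> (j = 1 \<and> s = inv_letter (face_word (r + i) ! 1) \<and> e' = (k, r, i, 0))"
  using assms by (cases "j = 1"; cases "j = 5") (auto simp: inside_moves_def site_ok_def split: if_splits)

lemma inside_moves_reverse:
  assumes "site_ok e" and "(s, Inside e') \<in> set (inside_moves e)"
  shows "site_ok e' \<and> fan_of e' = fan_of e \<and> (inv_letter s, Inside e) \<in> set (inside_moves e')"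
proof -
  obtain k r i j where e: "e = (k, r, i, j)"
    by (cases e)
  have ok: "site_ok (k, r, i, j)"
    using assms(1) by (simp add: e)
  from Inside_in_inside_moves_cases[OF ok assms(2)[unfolded e]] show ?thesis
  proof (elim disjE conjE)
    assume "0 < i" and "j = 0" and "s = inv_letter (face_word (r + i - 1) ! 6)" and "e' = (k, r, i - 1, 5)"
    moreover have "r + (i - 1) = r + i - 1" and "i - 1 + 1 = i"
      using \<open>0 < i\<close> by auto
    ultimately show ?thesis
      using ok by (simp add: e inside_moves_def site_ok_def fan_of_def)
  qed (use ok in \<open>auto simp: e inside_moves_def site_ok_def fan_of_def\<close>)
qed

lemma site_ok_spoke_site_root: "site_ok (spoke_site (7, 0) t)"
  using link_index_less[of t] by (simp add: spoke_site_def site_ok_def link_offset_def)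

lemma site_ok_spoke_site_child:
  assumes "site_ok e" and "t \<notin> set (inside_letters e)"
  shows "site_ok (spoke_site (child_fan e) t)"
  using notin_inside_letters_iff[OF assms(1), of t] assms(2) site_ok_child_fan[OF assms(1)]
  by (auto simp: spoke_site_def site_ok_def)

lemma spoke_site_link:
  assumes "site_ok (k, r, i, 0)"
  shows "spoke_site (k, r) (link (r + i)) = (k, r, i, 0)"
proof -
  have "r < 8" and "i < 8"
    using assms by (auto simp: site_ok_def)
  then show ?thesis
    by (simp add: spoke_site_def link_offset_link)
qed

lemma site_move_spoke_site_inv_letter:
  assumes "site_ok (spoke_site B t)"
  shows "site_move (spoke_site B t) (inv_letter t) = Pop"
proof -
  have "snd B < 8"
    using assms by (auto simp: spoke_site_def site_ok_def)
  then have "(inv_letter t, Pop) \<in> set (inside_moves (spoke_site B t))"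
    by (simp add: spoke_site_def Pop_in_inside_moves_iff link_add_link_offset)
  then show ?thesis
    using assms site_move_inside by blast
qed

lemma distinct_inside_letters: "site_ok e \<Longrightarrow> distinct (inside_letters e)"
  using free_interval_inside_letters by (simp add: free_interval_def)

lemma sum_site_move:
  assumes "site_ok e"
  shows "(\<Sum>s\<in>UNIV. H (site_move e s)) = (\<Sum>p\<leftarrow>inside_moves e. H (snd p))
    + (\<Sum>t<Suc (fst (child_fan e)). H (Push (fst (child_fan e), snd (child_fan e), t, 0)))"
proof -
  define U where "U = set (inside_letters e)"
  define k' where "k' = fst (child_fan e)"
  define r' where "r' = snd (child_fan e)"
  have "r' < 8" and "k' < 8"
    using site_ok_child_fan[OF assms] by (auto simp: k'_def r'_def)
  have "(\<Sum>s\<in>U. H (site_move e s)) = (\<Sum>s\<leftarrow>inside_letters e. H (site_move e s))"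
    unfolding U_def by (rule sum.distinct_set_conv_list[OF distinct_inside_letters[OF assms]])
  also have "\<dots> = (\<Sum>p\<leftarrow>inside_moves e. H (snd p))"
    unfolding inside_letters_def map_map
    by (rule arg_cong[where f = sum_list], rule map_cong) (auto simp: site_move_inside[OF assms])
  finally have inside: "(\<Sum>s\<in>U. H (site_move e s)) = (\<Sum>p\<leftarrow>inside_moves e. H (snd p))" .
  have "(\<Sum>s\<in>UNIV - U. H (site_move e s)) = (\<Sum>s\<in>UNIV - U. H (Push (k', r', link_offset r' s, 0)))"
    by (rule sum.cong) (auto simp: U_def site_move_outside spoke_site_def k'_def r'_def)
  also have "\<dots> = (\<Sum>t<Suc k'. H (Push (k', r', t, 0)))"
  proof (rule sum.reindex_bij_witness[where i = "\<lambda>t. link (r' + t)" and j = "link_offset r'"])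
    fix s
    assume "s \<in> UNIV - U"
    then show "link (r' + link_offset r' s) = s" and "link_offset r' s \<in> {..<Suc k'}"
      using link_add_link_offset[OF \<open>r' < 8\<close>] notin_inside_letters_iff[OF assms, of s]
      by (auto simp: U_def k'_def r'_def)
  next
    fix t
    assume "t \<in> {..<Suc k'}"
    then have "link_offset r' (link (r' + t)) = t"
      using link_offset_link[OF \<open>r' < 8\<close>] \<open>k' < 8\<close> by simp
    then show "link_offset r' (link (r' + t)) = t" and "link (r' + t) \<in> UNIV - U"
      using \<open>t \<in> {..<Suc k'}\<close> notin_inside_letters_iff[OF assms, of "link (r' + t)"]
      by (auto simp: U_def k'_def r'_def)
  qed simp
  finally show ?thesis
    using sum.subset_diff[of U UNIV "\<lambda>s. H (site_move e s)"] inside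
    by (simp add: k'_def r'_def add.commute)
qed

definition state_move :: "site list \<Rightarrow> letter \<Rightarrow> site list" where
  "state_move v s = (if v = [] then [spoke_site (7, 0) s] else
     (case site_move (last v) s of
       Inside e' \<Rightarrow> butlast v @ [e'] | Pop \<Rightarrow> butlast v | Push e' \<Rightarrow> v @ [e']))"

fun valid_from :: "nat \<times> nat \<Rightarrow> site list \<Rightarrow> bool" where
  "valid_from B [] = True"
| "valid_from B (e # v) = (site_ok e \<and> fan_of e = B \<and> valid_from (child_fan e) v)"

definition valid_state :: "site list \<Rightarrow> bool" where
  "valid_state v = valid_from (7, 0) v"

lemma valid_from_snoc:
  "valid_from B (v @ [e]) =
     (valid_from B v \<and> site_ok e \<and> fan_of e = (if v = [] then B else child_fan (last v)))"
  by (induction v arbitrary: B) auto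

lemma valid_from_append_left: "valid_from B (u @ w) \<Longrightarrow> valid_from B u"
  by (induction u arbitrary: B) auto

lemma state_move_snoc:
  "state_move (v @ [e]) s =
     (case site_move e s of Inside e' \<Rightarrow> v @ [e'] | Pop \<Rightarrow> v | Push e' \<Rightarrow> v @ [e, e'])"
  by (simp add: state_move_def split: move_kind.splits)

lemma state_move_Nil_inv_letter: "state_move (state_move [] s) (inv_letter s) = []"
  using site_move_spoke_site_inv_letter[OF site_ok_spoke_site_root]
  by (simp add: state_move_def)

lemma state_move_Pop_inv_letter:
  assumes "valid_state (v @ [e])" and "site_move e s = Pop"
  shows "state_move v (inv_letter s) = v @ [e]"
proof -
  obtain k r i j where e: "e = (k, r, i, j)"
    by (cases e)
  have "j = 0" and s: "s = inv_letter (link (r + i))"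
    using site_move_PopD[OF assms(2)] by (auto simp: e Pop_in_inside_moves_iff)
  have ok: "site_ok e" and fan: "fan_of e = (if v = [] then (7, 0) else child_fan (last v))"
    using assms(1) by (auto simp: valid_state_def valid_from_snoc)
  have spoke: "spoke_site (fan_of e) (inv_letter s) = e"
    using spoke_site_link[of k r i] ok by (simp add: e \<open>j = 0\<close> s fan_of_def)
  show ?thesis
  proof (cases "v = []")
    case True
    then show ?thesis
      using spoke fan by (simp add: state_move_def)
  next
    case False
    then obtain u a where v: "v = u @ [a]"
      by (metis append_butlast_last_id)
    have "valid_from (7, 0) (u @ [a])"
      using assms(1) valid_from_append_left[of _ "u @ [a]" "[e]"] by (simp add: v valid_state_def)
    then have "site_ok a"
      by (simp add: valid_from_snoc)
    moreover have "site_ok (spoke_site (child_fan a) (inv_letter s))"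
      using spoke fan ok by (simp add: v)
    ultimately have "inv_letter s \<notin> set (inside_letters a)"
      using notin_inside_letters_iff by (simp add: spoke_site_def site_ok_def)
    then show ?thesis
      using spoke fan by (simp add: v state_move_snoc site_move_outside)
  qed
qed

lemma valid_state_move:
  assumes "valid_state v"
  shows "valid_state (state_move v s) \<and> state_move (state_move v s) (inv_letter s) = v"
proof (cases "v = []")
  case True
  then show ?thesis
    using site_ok_spoke_site_root state_move_Nil_inv_letter
    by (simp add: state_move_def valid_state_def spoke_site_def fan_of_def)
next
  case False
  then obtain u e where v: "v = u @ [e]"
    by (metis append_butlast_last_id)
  have valid_u: "valid_from (7, 0) u" and ok: "site_ok e"
    and fan: "fan_of e = (if u = [] then (7, 0) else child_fan (last u))"
    using assms by (auto simp: v valid_state_def valid_from_snoc)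
  show ?thesis
  proof (cases "site_move e s")
    case (Inside e')
    then have "site_ok e' \<and> fan_of e' = fan_of e \<and> (inv_letter s, Inside e) \<in> set (inside_moves e')"
      using inside_moves_reverse[OF ok] site_move_InsideD by blast
    moreover from this have "site_move e' (inv_letter s) = Inside e"
      using site_move_inside by blast
    ultimately show ?thesis
      using Inside valid_u fan by (simp add: v state_move_snoc valid_state_def valid_from_snoc)
  next
    case Pop
    then show ?thesis
      using assms state_move_Pop_inv_letter valid_u by (simp add: v state_move_snoc valid_state_def)
  next
    case (Push e')
    then have "site_ok e'" and "fan_of e' = child_fan e" and "site_move e' (inv_letter s) = Pop"
      using site_move_PushD[OF Push] site_ok_spoke_site_child[OF ok] site_move_spoke_site_inv_letter
      by (auto simp: spoke_site_def fan_of_def)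
    moreover have "state_move v s = v @ [e']" and "last v = e"
      using Push by (simp_all add: v state_move_snoc)
    ultimately show ?thesis
      using assms \<open>v \<noteq> []\<close> by (simp add: state_move_snoc valid_state_def valid_from_snoc)
  qed
qed

definition site_word :: "site \<Rightarrow> letter list" where
  "site_word e = (case e of (k, r, i, j) \<Rightarrow>
     if j = 0 then [link (r + i)] else take (j + 1) (face_word (r + i)))"

definition state_word :: "site list \<Rightarrow> letter list" where
  "state_word v = concat (map site_word v)"

lemma site_word_eq_take_face_word:
  assumes "j \<le> 5"
  shows "site_word (k, r, i, j) = take (Suc j) (face_word (r + i))"
  using assms face_word_nth_0[of "r + i"] take_Suc_conv_app_nth[of 0 "face_word (r + i)"]
  by (simp add: site_word_def)

lemma J2_eq_site_word_next_spoke: "J2_eq (site_word (k, r, Suc i, 0)) (take 7 (face_word (r + i)))"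
  using J2_eq.sym[OF J2_eq_take_7_face_word[of "r + i"]] by (simp add: site_word_def)

lemma J2_eq_take_face_word_inv_letter:
  assumes "p < 8"
  shows "J2_eq (take (Suc p) (face_word m) @ [inv_letter (face_word m ! p)]) (take p (face_word m))"
  using assms J2_eq_cancel_last[of "take p (face_word m)" "face_word m ! p"]
  by (simp add: take_Suc_conv_app_nth)

lemma J2_eq_inside_move:
  assumes "site_ok e" and "(s, Inside e') \<in> set (inside_moves e)"
  shows "J2_eq (site_word e @ [s]) (site_word e')"
proof -
  obtain k r i j where e: "e = (k, r, i, j)"
    by (cases e)
  have ok: "site_ok (k, r, i, j)"
    using assms(1) by (simp add: e)
  then have "j \<le> 5"
    by (auto simp: site_ok_def)
  from Inside_in_inside_moves_cases[OF ok assms(2)[unfolded e]] show ?thesis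
  proof (elim disjE conjE)
    assume "0 < i" and "j = 0" and s: "s = inv_letter (face_word (r + i - 1) ! 6)" and "e' = (k, r, i - 1, 5)"
    then obtain i' where i: "i = Suc i'" and e': "e' = (k, r, i', 5)"
      using gr0_implies_Suc by auto
    have "J2_eq (site_word e @ [s]) (take 7 (face_word (r + i')) @ [s])"
      using J2_eq_append_right[OF J2_eq_site_word_next_spoke] by (simp add: e i \<open>j = 0\<close>)
    also have "J2_eq \<dots> (take 6 (face_word (r + i')))"
      using J2_eq_take_face_word_inv_letter[of 6 "r + i'"] by (simp add: s i)
    finally show ?thesis
      by (simp add: e' site_word_eq_take_face_word)
  next
    assume "j = 5" and "s = face_word (r + i) ! 6" and "e' = (k, r, i + 1, 0)"
    then have "site_word e @ [s] = take 7 (face_word (r + i))"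
      using take_Suc_conv_app_nth[of 6 "face_word (r + i)"] by (simp add: e site_word_eq_take_face_word)
    then show ?thesis
      using J2_eq.sym[OF J2_eq_site_word_next_spoke[of k r i]] \<open>e' = (k, r, i + 1, 0)\<close> by simp
  next
    assume "1 < j" and "s = inv_letter (face_word (r + i) ! j)" and "e' = (k, r, i, j - 1)"
    then show ?thesis
      using J2_eq_take_face_word_inv_letter[of j "r + i"] \<open>j \<le> 5\<close>
      by (simp add: e site_word_eq_take_face_word)
  next
    assume "j = 1" and "s = inv_letter (face_word (r + i) ! 1)" and "e' = (k, r, i, 0)"
    then show ?thesis
      using J2_eq_take_face_word_inv_letter[of 1 "r + i"]
      by (simp add: e site_word_eq_take_face_word)
  qed (auto simp: e site_word_eq_take_face_word take_Suc_conv_app_nth J2_eq.refl \<open>j \<le> 5\<close>)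
qed

lemma J2_eq_state_move:
  assumes "valid_state v"
  shows "J2_eq (state_word v @ [s]) (state_word (state_move v s))"
proof (cases "v = []")
  case True
  then show ?thesis
    using link_add_link_offset[of 0 s]
    by (simp add: state_move_def state_word_def site_word_def spoke_site_def J2_eq.refl)
next
  case False
  then obtain u e where v: "v = u @ [e]"
    by (metis append_butlast_last_id)
  have ok: "site_ok e"
    using assms by (auto simp: v valid_state_def valid_from_snoc)
  show ?thesis
  proof (cases "site_move e s")
    case (Inside e')
    then have "J2_eq (state_word u @ site_word e @ [s]) (state_word u @ site_word e')"
      using J2_eq_append_left J2_eq_inside_move[OF ok] site_move_InsideD by blast
    then show ?thesis
      using Inside by (simp add: v state_move_snoc state_word_def)
  next
    case Pop
    obtain k r i j where e: "e = (k, r, i, j)"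
      by (cases e)
    have "j = 0" and "s = inv_letter (link (r + i))"
      using site_move_PopD[OF Pop] by (auto simp: e Pop_in_inside_moves_iff)
    then show ?thesis
      using Pop J2_eq_cancel_last[of "state_word u" "link (r + i)"]
      by (simp add: v e state_move_snoc state_word_def site_word_def)
  next
    case (Push e')
    then have "e' = (fst (child_fan e), snd (child_fan e), link_offset (snd (child_fan e)) s, 0)"
      using site_move_PushD(2) by (simp add: spoke_site_def)
    then have "site_word e' = [s]"
      using link_add_link_offset[OF site_ok_child_fan(2)[OF ok]] by (simp add: site_word_def)
    then show ?thesis
      using Push by (simp add: v state_move_snoc state_word_def J2_eq.refl)
  qed
qed

interpretation fan_model: J2_labelled_action "{v. valid_state v}" state_move state_word
  by unfold_locales (simp_all add: valid_state_move J2_eq_state_move)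

section \<open>The certificate\<close>

type_synonym cert_row = "int list \<times> int list \<times> int list"

definition fan_positions :: "nat \<Rightarrow> (nat \<times> nat) list" where
  "fan_positions k = map (\<lambda>i. (i, 0)) [0..<k + 1] @ concat (map (\<lambda>i. map (\<lambda>j. (i, j)) [1..<6]) [0..<k])"

definition position_index :: "nat \<Rightarrow> nat \<times> nat \<Rightarrow> nat" where
  "position_index k p = (if snd p = 0 then fst p else k + 1 + 5 * fst p + (snd p - 1))"

definition inside_neighbours :: "nat \<Rightarrow> nat \<times> nat \<Rightarrow> (nat \<times> nat) list" where
  "inside_neighbours k p = (case p of (i, j) \<Rightarrow>
     if j = 0 then (if i < k then [(i, 1)] else []) @ (if 0 < i then [(i - 1, 5)] else [])
     else [if j < 5 then (i, j + 1) else (i + 1, 0), if 1 < j then (i, j - 1) else (i, 0)])"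

definition row_values :: "cert_row \<Rightarrow> nat \<Rightarrow> int list" where
  "row_values a k = (if k = 7 then fst a else if k = 4 then fst (snd a) else if k = 5 then snd (snd a) else [])"

text \<open>Row \<open>n\<close> of the table lists, for the fans of width 7, 4 and 5, the numbers
  \<open>2 ^ 26 * c\<close> where \<open>c\<close> is the factor contributed to the test function by a site of that fan
  at depth \<open>n\<close>, in the order of \<open>position_index\<close>; it does not depend on the rotation
  \<open>r\<close> of the fan. \<open>cert_ineq\<close> is the superharmonicity inequality at such a site,
  multiplied by \<open>10000 * 2 ^ 52\<close>.\<close>
definition cert_ineq :: "bool \<Rightarrow> cert_row \<Rightarrow> cert_row \<Rightarrow> nat \<Rightarrow> nat \<times> nat \<Rightarrow> bool" where
  "cert_ineq at_root a b k p = (let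
       x = nth_default 0 (row_values a k) (position_index k p);
       S = sum_list (map (\<lambda>q. nth_default 0 (row_values a k) (position_index k q)) (inside_neighbours k p));
       k' = child_width k p;
       D = sum_list (map (nth_default 0 (row_values b k')) [0..<k' + 1])
     in 0 \<le> x \<and>
        52985 * 2 ^ 26 * x \<le> 10000 * (2 ^ 26 * S + (if snd p = 0 \<and> \<not> at_root then 2 ^ 52 else 0) + x * D))"

definition cert_level :: "bool \<Rightarrow> cert_row \<Rightarrow> cert_row \<Rightarrow> bool" where
  "cert_level at_root a b = list_all (\<lambda>k. list_all (cert_ineq at_root a b k) (fan_positions k)) [4, 5, 7]"

fun cert_chain :: "bool \<Rightarrow> cert_row list \<Rightarrow> bool" where
  "cert_chain at_root (a # b # rows) = (cert_level at_root a b \<and> cert_chain False (b # rows))"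
| "cert_chain at_root rows = True"

definition cert_table :: "cert_row list" where
  "cert_table = [
  ([10052852,22198957,31342030,36245213,36245213,31342030,22198957,10052852,18998486,25851633,29857491,30574855,27924715,35588785,45058876,49566198,48614317,42308071,47364701,58170640,62569685,60077327,50968073,52733211,63413191,67108864,63413191,52733211,50968073,60077327,62569685,58170640,47364701,42308071,48614317,49566198,45058876,35588785,27924715,30574855,29857491,25851633,18998486],[],[]),
  ([],[52556172,64168488,65019366,64168488,52556172,43528438,39076623,38732730,42460608,50652150,51857337,44997678,42868391,45245635,52379318,52379318,45245635,42868391,44997678,51857337,50652150,42460608,38732730,39076623,43528438],[52556578,64174336,65092921,65092921,64174336,52556578,43529292,39078014,38734805,42463585,50656342,51868602,45015545,42894739,45283233,52432119,52520946,45470225,43199553,45470225,52520946,52432119,45283233,42894739,45015545,51868602,50656342,42463585,38734805,39078014,43529292]),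
  ([],[34933707,36101894,36117744,36101894,34933707,18867719,11502305,9441010,11733300,19436230,19467347,11809883,9598375,11813017,19475061,19475061,11813017,9598375,11809883,19467347,19436230,11733300,9441010,11502305,18867719],[34933707,36101897,36117965,36117965,36101897,34933707,18867719,11502305,9441011,11733301,19436231,19467354,11809898,9598405,11813076,19475174,19475596,11814115,9600540,11814115,19475596,19475174,11813076,9598405,11809898,19467354,19436231,11733301,9441011,11502305,18867719]),
  ([],[31412237,31895882,31899685,31895882,31412237,15122092,8174377,6276792,8257011,15338411,15346668,8278627,6325121,8279276,15348369,15348369,8279276,6325121,8278627,15346668,15338411,8257011,6276792,8174377,15122092],[31412237,31895883,31899715,31899715,31895883,31412237,15122092,8174377,6276792,8257011,15338411,15346669,8278628,6325124,8279283,15348383,15348448,8279453,6325504,8279453,15348448,15348383,8279283,6325124,8278628,15346669,15338411,8257011,6276792,8174377,15122092]),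
  ([],[29791489,30078918,30080623,30078918,29791489,13548813,6890657,5106998,6936064,13671748,13675644,6946613,5131662,6946882,13676374,13676374,6946882,5131662,6946613,13675644,13671748,6936064,5106998,6890657,13548813],[29791489,30078918,30080634,30080634,30078918,29791489,13548813,6890657,5106998,6936064,13671748,13675645,6946613,5131663,6946884,13676378,13676401,6946947,5131809,6946947,13676401,13676378,6946884,5131663,6946613,13675645,13671748,6936064,5106998,6890657,13548813]),
  ([],[28845956,29048685,29049696,29048685,28845956,12674624,6210111,4501590,6240597,12758944,12761326,6247186,4517432,6247338,12761747,12761747,6247338,4517432,6247186,12761326,12758944,6240597,4501590,6210111,12674624],[28845956,29048685,29049701,29049701,29048685,28845956,12674624,6210111,4501590,6240597,12758944,12761327,6247186,4517432,6247339,12761749,12761761,6247372,4517511,6247372,12761761,12761749,6247339,4517432,6247186,12761327,12758944,6240597,4501590,6210111,12674624]),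
  ([],[28222356,28380183,28380882,28380183,28222356,12115560,5787854,4131821,5810793,12179955,12181637,5815515,4143393,5815616,12181922,12181922,5815616,4143393,5815515,12181637,12179955,5810793,4131821,5787854,12115560],[28222356,28380183,28380885,28380885,28380183,28222356,12115560,5787854,4131821,5810793,12179955,12181637,5815515,4143393,5815617,12181923,12181931,5815638,4143444,5815638,12181931,12181923,5815617,4143393,5815515,12181637,12179955,5810793,4131821,5787854,12115560]),
  ([],[27778413,27909261,27909792,27909261,27778413,11725979,5499792,3882373,5518341,11778621,11779919,5522026,3891532,5522101,11780133,11780133,5522101,3891532,5522026,11779919,11778621,5518341,3882373,5499792,11725979],[27778413,27909261,27909794,27909794,27909261,27778413,11725979,5499792,3882373,5518341,11778621,11779919,5522026,3891532,5522102,11780134,11780139,5522117,3891570,5522117,11780139,11780134,5522102,3891532,5522026,11779919,11778621,5518341,3882373,5499792,11725979]),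
  ([],[27445290,27558495,27558925,27558495,27445290,11438227,5290362,3702532,5306105,11483283,11484347,5309149,3710181,5309209,11484518,11484518,5309209,3710181,5309149,11484347,11483283,5306105,3702532,5290362,11438227],[27445290,27558495,27558927,27558927,27558495,27445290,11438227,5290362,3702532,5306105,11483283,11484347,5309149,3710181,5309209,11484519,11484523,5309221,3710210,5309221,11484523,11484519,5309209,3710181,5309149,11484347,11483283,5306105,3702532,5290362,11438227]),
  ([],[27185476,27286417,27286782,27286417,27185476,11216515,5130963,3566548,5144788,11256349,11257257,5147406,3573180,5147456,11257401,11257401,5147456,3573180,5147406,11257257,11256349,5144788,3566548,5130963,11216515],[27185476,27286417,27286783,27286783,27286417,27185476,11216515,5130963,3566548,5144788,11256349,11257257,5147406,3573181,5147456,11257401,11257405,5147465,3573204,5147465,11257405,11257401,5147456,3573181,5147406,11257257,11256349,5144788,3566548,5130963,11216515]),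
  ([],[26976737,27068749,27069067,27068749,26976737,11040106,5005373,3459969,5017820,11076165,11076965,5020137,3465880,5020180,11077090,11077090,5020180,3465880,5020137,11076965,11076165,5017820,3459969,5005373,11040106],[26976737,27068749,27069068,27069068,27068749,26976737,11040106,5005373,3459969,5017820,11076165,11076965,5020137,3465880,5020180,11077090,11077093,5020188,3465901,5020188,11077093,11077090,5020180,3465880,5020137,11076965,11076165,5017820,3459969,5005373,11040106]),
  ([],[26805033,26890303,26890588,26890303,26805033,10896143,4903703,3374064,4915120,10929368,10930088,4917215,3379440,4917253,10930199,10930199,4917253,3379440,4917215,10930088,10929368,4915120,3374064,4903703,10896143],[26805033,26890303,26890589,26890589,26890303,26805033,10896143,4903703,3374064,4915120,10929368,10930088,4917215,3379440,4917253,10930199,10930201,4917260,3379458,4917260,10930201,10930199,4917253,3379440,4917215,10930088,10929368,4915120,3374064,4903703,10896143]),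
  ([],[26661056,26741084,26741343,26741084,26661056,10776222,4819580,3303243,4830202,10807253,10807912,4832128,3308210,4832162,10808013,10808013,4832162,3308210,4832128,10807912,10807253,4830202,3303243,4819580,10776222],[26661056,26741084,26741344,26741344,26741084,26661056,10776222,4819580,3303243,4830202,10807253,10807912,4832128,3308210,4832163,10808013,10808015,4832169,3308226,4832169,10808015,10808013,4832163,3308210,4832128,10807912,10807253,4830202,3303243,4819580,10776222]),
  ([],[26538381,26614235,26614475,26614235,26538381,10674616,4748712,3243767,4758705,10703906,10704518,4760498,3248411,4760530,10704610,10704610,4760530,3248411,4760498,10704518,10703906,4758705,3243767,4748712,10674616],[26538381,26614235,26614476,26614476,26614235,26538381,10674616,4748712,3243767,4758705,10703906,10704518,4760498,3248411,4760530,10704611,10704612,4760536,3248425,4760536,10704612,10704611,4760530,3248411,4760498,10704518,10703906,4758705,3243767,4748712,10674616]),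
  ([],[26432433,26504895,26505119,26504895,26432433,10587287,4688101,3193035,4697586,10615165,10615739,4699272,3197419,4699302,10615825,10615825,4699302,3197419,4699272,10615739,10615165,4697586,3193035,4688101,10587287],[26432433,26504895,26505119,26505119,26504895,26432433,10587287,4688101,3193035,4697586,10615165,10615739,4699272,3197419,4699302,10615825,10615827,4699307,3197433,4699307,10615827,10615825,4699302,3197419,4699272,10615739,10615165,4697586,3193035,4688101,10587287]),
  ([],[26339858,26409516,26409727,26409516,26339858,10511301,4635591,3149187,4644656,10538015,10538558,4646256,3153358,4646283,10538639,10538639,4646283,3153358,4646256,10538558,10538015,4644656,3149187,4635591,10511301],[26339858,26409516,26409728,26409728,26409516,26339858,10511301,4635591,3149187,4644656,10538015,10538558,4646256,3153358,4646283,10538639,10538641,4646288,3153370,4646288,10538641,10538639,4646283,3153358,4646256,10538558,10538015,4644656,3149187,4635591,10511301]),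
  ([],[26258147,26325452,26325653,26325452,26258147,10444480,4589588,3110852,4598303,10470219,10470736,4599830,3114846,4599856,10470813,10470813,4599856,3114846,4599830,10470736,10470219,4598303,3110852,4589588,10444480],[26258147,26325452,26325653,26325653,26325452,26258147,10444480,4589588,3110852,4598303,10470219,10470736,4599830,3114846,4599856,10470813,10470815,4599861,3114858,4599861,10470815,10470813,4599856,3114846,4599830,10470736,10470219,4598303,3110852,4589588,10444480]),
  ([],[26185378,26250684,26250876,26250684,26185378,10385168,4548893,3077003,4557310,10410079,10410574,4558776,3080846,4558801,10410648,10410648,4558801,3080846,4558776,10410574,10410079,4557310,3077003,4548893,10385168],[26185378,26250684,26250876,26250876,26250684,26185378,10385168,4548893,3077003,4557310,10410079,10410574,4558776,3080847,4558801,10410648,10410649,4558805,3080858,4558805,10410649,10410648,4558801,3080847,4558776,10410574,10410079,4557310,3077003,4548893,10385168]),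
  ([],[26120060,26183647,26183831,26183647,26120060,10332084,4512581,3046851,4520744,10356285,10356762,4522158,3050565,4522181,10356832,10356832,4522181,3050565,4522158,10356762,10356285,4520744,3046851,4512581,10332084],[26120060,26183647,26183832,26183832,26183647,26120060,10332084,4512581,3046851,4520744,10356285,10356762,4522158,3050565,4522181,10356832,10356833,4522186,3050576,4522186,10356833,10356832,4522181,3050565,4522158,10356762,10356285,4520744,3046851,4512581,10332084]),
  ([],[26061012,26123107,26123285,26123107,26061012,10284225,4479933,3019780,4487874,10307809,10308270,4489243,3023384,4489266,10308337,10308337,4489266,3023384,4489243,10308270,10307809,4487874,3019780,4479933,10284225],[26061012,26123107,26123285,26123285,26123107,26061012,10284225,4479933,3019780,4487874,10307809,10308270,4489243,3023384,4489266,10308337,10308339,4489270,3023394,4489270,10308339,10308337,4489266,3023384,4489243,10308270,10307809,4487874,3019780,4479933,10284225]),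
  ([],[26007291,26068080,26068251,26068080,26007291,10240788,4450375,2995306,4458123,10263832,10264279,4459452,2998813,4459474,10264344,10264344,4459474,2998813,4459452,10264279,10263832,4458123,2995306,4450375,10240788],[26007291,26068080,26068252,26068252,26068080,26007291,10240788,4450375,2995306,4458123,10263832,10264279,4459452,2998813,4459474,10264344,10264346,4459478,2998823,4459478,10264346,10264344,4459474,2998813,4459452,10264279,10263832,4458123,2995306,4450375,10240788]),
  ([],[25958133,26017767,26017934,26017767,25958133,10201128,4423449,2973039,4431026,10223696,10224130,4432321,2976460,4432342,10224193,10224193,4432342,2976460,4432321,10224130,10223696,4431026,2973039,4423449,10201128],[25958133,26017767,26017935,26017935,26017767,25958133,10201128,4423449,2973039,4431026,10223696,10224130,4432321,2976460,4432342,10224193,10224195,4432345,2976469,4432345,10224195,10224193,4432342,2976460,4432321,10224130,10223696,4431026,2973039,4423449,10201128]),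
  ([],[25912911,25971519,25971681,25971519,25912911,10164718,4398780,2952663,4406206,10186862,10187285,4407470,2956007,4407490,10187347,10187347,4407490,2956007,4407470,10187285,10186862,4406206,2952663,4398780,10164718],[25912911,25971519,25971682,25971682,25971519,25912911,10164718,4398780,2952663,4406206,10186862,10187285,4407470,2956007,4407490,10187347,10187348,4407494,2956017,4407494,10187348,10187347,4407490,2956007,4407470,10187285,10186862,4406206,2952663,4398780,10164718]),
  ([],[25871107,25928797,25928955,25928797,25871107,10131123,4376063,2933918,4383353,10152887,10153301,4384589,2937195,4384609,10153361,10153361,4384609,2937195,4384589,10153301,10152887,4383353,2933918,4376063,10131123],[25871107,25928797,25928955,25928955,25928797,25871107,10131123,4376063,2933918,4383353,10152887,10153301,4384589,2937195,4384610,10153361,10153362,4384613,2937204,4384613,10153362,10153361,4384610,2937195,4384589,10153301,10152887,4383353,2933918,4376063,10131123]),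
  ([],[25832291,25889152,25889307,25889152,25832291,10099983,4355044,2916592,4362212,10121405,10121810,4363423,2919807,4363442,10121869,10121869,4363442,2919807,4363423,10121810,10121405,4362212,2916592,4355044,10099983],[25832291,25889152,25889307,25889307,25889152,25832291,10099983,4355044,2916592,4362212,10121405,10121810,4363423,2919807,4363442,10121869,10121870,4363446,2919816,4363446,10121870,10121869,4363442,2919807,4363423,10121810,10121405,4362212,2916592,4355044,10099983]),
  ([],[25796097,25852208,25852360,25852208,25796097,10070994,4335510,2900504,4342566,10092106,10092504,4343755,2903664,4343774,10092561,10092561,4343774,2903664,4343755,10092504,10092106,4342566,2900504,4335510,10070994],[25796097,25852208,25852360,25852360,25852208,25796097,10070994,4335510,2900504,4342566,10092106,10092504,4343755,2903664,4343774,10092561,10092562,4343777,2903672,4343777,10092562,10092561,4343774,2903664,4343755,10092504,10092106,4342566,2900504,4335510,10070994]),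
  ([],[25762218,25817647,25817795,25817647,25762218,10043900,4317281,2885505,4324236,10064731,10065121,4325405,2888614,4325423,10065176,10065176,4325423,2888614,4325405,10065121,10064731,4324236,2885505,4317281,10043900],[25762218,25817647,25817796,25817796,25817647,25762218,10043900,4317281,2885505,4324236,10064731,10065121,4325405,2888614,4325423,10065177,10065178,4325427,2888622,4325427,10065178,10065177,4325423,2888614,4325405,10065121,10064731,4324236,2885505,4317281,10043900]),
  ([],[25730392,25785195,25785341,25785195,25730392,10018483,4300205,2871466,4307069,10039056,10039439,4308218,2874529,4308237,10039494,10039494,4308237,2874529,4308218,10039439,10039056,4307069,2871466,4300205,10018483],[25730392,25785195,25785342,25785342,25785195,25730392,10018483,4300205,2871466,4307069,10039056,10039439,4308218,2874529,4308237,10039494,10039495,4308240,2874537,4308240,10039495,10039494,4308237,2874529,4308218,10039439,10039056,4307069,2871466,4300205,10018483]),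
  ([],[25700391,25754621,25754764,25754621,25700391,9994557,4284153,2858278,4290932,10014892,10015270,4292064,2861299,4292082,10015323,10015323,4292082,2861299,4292064,10015270,10014892,4290932,2858278,4284153,9994557],[25700391,25754621,25754764,25754764,25754621,25700391,9994557,4284153,2858278,4290932,10014892,10015270,4292064,2861299,4292082,10015324,10015325,4292085,2861307,4292085,10015325,10015324,4292082,2861299,4292064,10015270,10014892,4290932,2858278,4284153,9994557]),
  ([],[25672021,25725721,25725862,25725721,25672021,9971960,4269013,2845849,4275713,9992076,9992448,4276830,2848830,4276847,9992501,9992501,4276847,2848830,4276830,9992448,9992076,4275713,2845849,4269013,9971960],[25672021,25725721,25725863,25725863,25725721,25672021,9971960,4269013,2845849,4275713,9992076,9992448,4276830,2848830,4276847,9992501,9992502,4276850,2848838,4276850,9992502,9992501,4276847,2848830,4276830,9992448,9992076,4275713,2845849,4269013,9971960]),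
  ([],[25645112,25698322,25698461,25698322,25645112,9950552,4254688,2834097,4261315,9970465,9970832,4262417,2837041,4262434,9970884,9970884,4262434,2837041,4262417,9970832,9970465,4261315,2834097,4254688,9950552],[25645112,25698322,25698461,25698461,25698322,25645112,9950552,4254688,2834097,4261315,9970465,9970832,4262417,2837041,4262434,9970884,9970885,4262437,2837049,4262437,9970885,9970884,4262434,2837041,4262417,9970832,9970465,4261315,2834097,4254688,9950552]),
  ([],[25619516,25672269,25672406,25672269,25619516,9930212,4241092,2822951,4247652,9949936,9950298,4248740,2825862,4248757,9950349,9950349,4248757,2825862,4248740,9950298,9949936,4247652,2822951,4241092,9930212],[25619516,25672269,25672407,25672407,25672269,25619516,9930212,4241092,2822951,4247652,9949936,9950298,4248740,2825862,4248757,9950350,9950351,4248760,2825869,4248760,9950351,9950350,4248757,2825862,4248740,9950298,9949936,4247652,2822951,4241092,9930212]),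
  ([],[25595102,25647430,25647565,25647430,25595102,9910832,4228154,2812350,4234650,9930380,9930738,4235726,2815229,4235743,9930788,9930788,4235743,2815229,4235726,9930738,9930380,4234650,2812350,4228154,9910832],[25595102,25647430,25647566,25647566,25647430,25595102,9910832,4228154,2812350,4234650,9930380,9930738,4235726,2815229,4235743,9930789,9930789,4235746,2815237,4235746,9930789,9930789,4235743,2815229,4235726,9930738,9930380,4234650,2812350,4228154,9910832]),
  ([],[25571755,25623686,25623819,25623686,25571755,9892319,4215807,2802240,4222244,9911702,9912056,4223308,2805090,4223325,9912105,9912105,4223325,2805090,4223308,9912056,9911702,4222244,2802240,4215807,9892319],[25571755,25623686,25623819,25623819,25623686,25571755,9892319,4215807,2802240,4222244,9911702,9912056,4223308,2805090,4223325,9912106,9912106,4223327,2805097,4223327,9912106,9912106,4223325,2805090,4223308,9912056,9911702,4222244,2802240,4215807,9892319]),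
  ([],[25549373,25600931,25601063,25600931,25549373,9874588,4203995,2792573,4210377,9893817,9894167,4211429,2795395,4211445,9894216,9894216,4211445,2795395,4211429,9894167,9893817,4210377,2792573,4203995,9874588],[25549373,25600931,25601063,25601063,25600931,25549373,9874588,4203995,2792573,4210377,9893817,9894167,4211429,2795395,4211445,9894216,9894217,4211448,2795402,4211448,9894217,9894216,4211445,2795395,4211429,9894167,9893817,4210377,2792573,4203995,9874588]),
  ([],[25527866,25579072,25579203,25579072,25527866,9857567,4192666,2783307,4198995,9876650,9876996,4200037,2786103,4200054,9877044,9877044,4200054,2786103,4200037,9876996,9876650,4198995,2783307,4192666,9857567],[25527866,25579072,25579203,25579203,25579072,25527866,9857567,4192666,2783307,4198995,9876650,9876996,4200037,2786103,4200054,9877045,9877045,4200056,2786110,4200056,9877045,9877045,4200054,2786103,4200037,9876996,9876650,4198995,2783307,4192666,9857567]),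
  ([],[25507152,25558027,25558156,25558027,25507152,9841189,4181776,2774404,4188056,9860134,9860476,4189088,2777175,4189103,9860524,9860524,4189103,2777175,4189088,9860476,9860134,4188056,2774404,4181776,9841189],[25507152,25558027,25558156,25558156,25558027,25507152,9841189,4181776,2774404,4188056,9860134,9860476,4189088,2777175,4189103,9860524,9860525,4189106,2777182,4189106,9860525,9860524,4189103,2777175,4189088,9860476,9860134,4188056,2774404,4181776,9841189]),
  ([],[25487159,25537719,25537847,25537719,25487159,9825394,4171283,2765831,4177516,9844209,9844548,4178538,2768579,4178554,9844595,9844595,4178554,2768579,4178538,9844548,9844209,4177516,2765831,4171283,9825394],[25487159,25537719,25537847,25537847,25537719,25487159,9825394,4171283,2765831,4177516,9844209,9844548,4178538,2768579,4178554,9844595,9844596,4178557,2768586,4178557,9844596,9844595,4178554,2768579,4178538,9844548,9844209,4177516,2765831,4171283,9825394]),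
  ([],[25467819,25518082,25518209,25518082,25467819,9810129,4161151,2757557,4167340,9828820,9829156,4168353,2760282,4168369,9829203,9829203,4168369,2760282,4168353,9829156,9828820,4167340,2757557,4161151,9810129],[25467819,25518082,25518209,25518209,25518082,25467819,9810129,4161151,2757557,4167340,9828820,9829156,4168353,2760282,4168369,9829203,9829204,4168371,2760289,4168371,9829204,9829203,4168369,2760282,4168353,9829156,9828820,4167340,2757557,4161151,9810129]),
  ([],[25449074,25499055,25499180,25499055,25449074,9795346,4151348,2749555,4157494,9813919,9814252,4158499,2752259,4158514,9814298,9814298,4158514,2752259,4158499,9814252,9813919,4157494,2749555,4151348,9795346],[25449074,25499055,25499180,25499180,25499055,25449074,9795346,4151348,2749555,4157494,9813919,9814252,4158499,2752259,4158514,9814298,9814299,4158517,2752265,4158517,9814299,9814298,4158514,2752259,4158499,9814252,9813919,4157494,2749555,4151348,9795346]),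
  ([],[25430870,25480581,25480705,25480581,25430870,9781000,4141842,2741799,4147948,9799462,9799791,4148945,2744483,4148960,9799837,9799837,4148960,2744483,4148945,9799791,9799462,4147948,2741799,4141842,9781000],[25430870,25480581,25480705,25480705,25480581,25430870,9781000,4141842,2741799,4147948,9799462,9799791,4148945,2744483,4148960,9799837,9799838,4148963,2744490,4148963,9799838,9799837,4148960,2744483,4148945,9799791,9799462,4147948,2741799,4141842,9781000]),
  ([],[25413156,25462610,25462733,25462610,25413156,9767053,4132608,2734269,4138675,9785406,9785733,4139664,2736933,4139679,9785779,9785779,4139679,2736933,4139664,9785733,9785406,4138675,2734269,4132608,9767053],[25413156,25462610,25462733,25462733,25462610,25413156,9767053,4132608,2734269,4138675,9785406,9785733,4139664,2736933,4139679,9785779,9785780,4139682,2736940,4139682,9785780,9785779,4139679,2736933,4139664,9785733,9785406,4138675,2734269,4132608,9767053]),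
  ([],[25395888,25445096,25445217,25445096,25395888,9753466,4123620,2726942,4129650,9771717,9772041,4130632,2729588,4130647,9772086,9772086,4130647,2729588,4130632,9772041,9771717,4129650,2726942,4123620,9753466],[25395888,25445096,25445218,25445218,25445096,25395888,9753466,4123620,2726942,4129650,9771717,9772041,4130632,2729588,4130647,9772087,9772087,4130649,2729595,4130649,9772087,9772087,4130647,2729588,4130632,9772041,9771717,4129650,2726942,4123620,9753466]),
  ([],[25379023,25427995,25428116,25427995,25379023,9740207,4114856,2719801,4120850,9758359,9758681,4121824,2722429,4121839,9758726,9758726,4121839,2722429,4121824,9758681,9758359,4120850,2719801,4114856,9740207],[25379023,25427995,25428116,25428116,25427995,25379023,9740207,4114856,2719801,4120850,9758359,9758681,4121824,2722429,4121839,9758726,9758726,4121842,2722435,4121842,9758726,9758726,4121839,2722429,4121824,9758681,9758359,4120850,2719801,4114856,9740207]),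
  ([],[25362523,25411268,25411388,25411268,25362523,9727244,4106293,2712827,4112254,9745301,9745621,4113221,2715438,4113236,9745665,9745665,4113236,2715438,4113221,9745621,9745301,4112254,2712827,4106293,9727244],[25362523,25411268,25411388,25411388,25411268,25362523,9727244,4106293,2712827,4112254,9745301,9745621,4113221,2715438,4113236,9745665,9745666,4113238,2715445,4113238,9745666,9745665,4113236,2715438,4113221,9745621,9745301,4112254,2712827,4106293,9727244]),
  ([],[25346352,25394879,25394998,25394879,25346352,9714548,4097914,2706006,4103842,9732514,9732831,4104802,2708600,4104817,9732875,9732875,4104817,2708600,4104802,9732831,9732514,4103842,2706006,4097914,9714548],[25346352,25394879,25394998,25394998,25394879,25346352,9714548,4097914,2706006,4103842,9732514,9732831,4104802,2708600,4104817,9732875,9732876,4104819,2708606,4104819,9732876,9732875,4104817,2708600,4104802,9732831,9732514,4103842,2706006,4097914,9714548]),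
  ([],[25330476,25378793,25378911,25378793,25330476,9702093,4089699,2699321,4095595,9719971,9720286,4096549,2701899,4096564,9720330,9720330,4096564,2701899,4096549,9720286,9719971,4095595,2699321,4089699,9702093],[25330476,25378793,25378911,25378911,25378793,25330476,9702093,4089699,2699321,4095595,9719971,9720286,4096549,2701899,4096564,9720330,9720330,4096566,2701905,4096566,9720330,9720330,4096564,2701899,4096549,9720286,9719971,4095595,2699321,4089699,9702093]),
  ([],[25314865,25362978,25363095,25362978,25314865,9689854,4081633,2692759,4087498,9707647,9707959,4088446,2695322,4088460,9708002,9708002,4088460,2695322,4088446,9707959,9707647,4087498,2692759,4081633,9689854],[25314865,25362978,25363096,25363096,25362978,25314865,9689854,4081633,2692759,4087498,9707647,9707959,4088446,2695322,4088460,9708002,9708003,4088462,2695328,4088462,9708003,9708002,4088460,2695322,4088446,9707959,9707647,4087498,2692759,4081633,9689854]),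
  ([],[25299487,25347405,25347521,25347405,25299487,9677806,4073698,2686307,4079533,9695517,9695827,4080475,2688855,4080489,9695870,9695870,4080489,2688855,4080475,9695827,9695517,4079533,2686307,4073698,9677806],[25299487,25347405,25347521,25347521,25347405,25299487,9677806,4073698,2686307,4079533,9695517,9695827,4080475,2688855,4080489,9695870,9695871,4080492,2688861,4080492,9695871,9695870,4080489,2688855,4080475,9695827,9695517,4079533,2686307,4073698,9677806]),
  ([],[25284316,25332043,25332158,25332043,25284316,9665928,4065881,2679953,4071687,9683559,9683867,4072623,2682486,4072637,9683909,9683909,4072637,2682486,4072623,9683867,9683559,4071687,2679953,4065881,9665928],[25284316,25332043,25332159,25332159,25332043,25284316,9665928,4065881,2679953,4071687,9683559,9683867,4072623,2682486,4072637,9683909,9683910,4072639,2682492,4072639,9683910,9683909,4072637,2682486,4072623,9683867,9683559,4071687,2679953,4065881,9665928]),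
  ([],[25269324,25316867,25316982,25316867,25269324,9654199,4058167,2673685,4063945,9671751,9672058,4064875,2676204,4064889,9672100,9672100,4064889,2676204,4064875,9672058,9671751,4063945,2673685,4058167,9654199],[25269324,25316867,25316982,25316982,25316867,25269324,9654199,4058167,2673685,4063945,9671751,9672058,4064875,2676204,4064889,9672100,9672101,4064891,2676210,4064891,9672101,9672100,4064889,2676204,4064875,9672058,9671751,4063945,2673685,4058167,9654199]),
  ([],[25254487,25301851,25301964,25301851,25254487,9642598,4050542,2667492,4056293,9660075,9660379,4057217,2669997,4057231,9660421,9660421,4057231,2669997,4057217,9660379,9660075,4056293,2667492,4050542,9642598],[25254487,25301851,25301964,25301964,25301851,25254487,9642598,4050542,2667492,4056293,9660075,9660379,4057217,2669997,4057231,9660421,9660421,4057233,2670003,4057233,9660421,9660421,4057231,2669997,4057217,9660379,9660075,4056293,2667492,4050542,9642598]),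
  ([],[25239779,25286969,25287082,25286969,25239779,9631105,4042994,2661364,4048718,9648509,9648811,4049637,2663856,4049650,9648852,9648852,4049650,2663856,4049637,9648811,9648509,4048718,2661364,4042994,9631105],[25239779,25286969,25287082,25287082,25286969,25239779,9631105,4042994,2661364,4048718,9648509,9648811,4049637,2663856,4049650,9648853,9648853,4049653,2663862,4049653,9648853,9648853,4049650,2663856,4049637,9648811,9648509,4048718,2661364,4042994,9631105]),
  ([],[25225178,25272198,25272310,25272198,25225178,9619704,4035510,2655291,4041208,9637035,9637335,4042122,2657769,4042135,9637376,9637376,4042135,2657769,4042122,9637335,9637035,4041208,2655291,4035510,9619704],[25225178,25272198,25272310,25272310,25272198,25225178,9619704,4035510,2655291,4041208,9637035,9637335,4042122,2657769,4042135,9637377,9637377,4042137,2657775,4042137,9637377,9637377,4042135,2657769,4042122,9637335,9637035,4041208,2655291,4035510,9619704]),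
  ([],[25210660,25257514,25257625,25257514,25210660,9608374,4028079,2649262,4033751,9625635,9625933,4034659,2651727,4034673,9625974,9625974,4034673,2651727,4034659,9625933,9625635,4033751,2649262,4028079,9608374],[25210660,25257514,25257625,25257625,25257514,25210660,9608374,4028079,2649262,4033751,9625635,9625933,4034659,2651727,4034673,9625974,9625975,4034675,2651733,4034675,9625975,9625974,4034673,2651727,4034659,9625933,9625635,4033751,2649262,4028079,9608374]),
  ([],[25196203,25242895,25243005,25242895,25196203,9597099,4020688,2643268,4026336,9614291,9614588,4027239,2645721,4027252,9614628,9614628,4027252,2645721,4027239,9614588,9614291,4026336,2643268,4020688,9597099],[25196203,25242895,25243005,25243005,25242895,25196203,9597099,4020688,2643268,4026336,9614291,9614588,4027239,2645721,4027252,9614629,9614629,4027254,2645727,4027254,9614629,9614629,4027252,2645721,4027239,9614588,9614291,4026336,2643268,4020688,9597099]),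
  ([],[25181784,25228318,25228428,25228318,25181784,9585861,4013327,2637301,4018950,9602986,9603281,4019848,2639741,4019861,9603321,9603321,4019861,2639741,4019848,9603281,9602986,4018950,2637301,4013327,9585861],[25181784,25228318,25228428,25228428,25228318,25181784,9585861,4013327,2637301,4018950,9602986,9603281,4019848,2639741,4019861,9603322,9603322,4019863,2639747,4019863,9603322,9603322,4019861,2639741,4019848,9603281,9602986,4018950,2637301,4013327,9585861]),
  ([],[25167383,25213761,25213870,25213761,25167383,9574644,4005984,2631350,4011583,9591703,9591996,4012476,2633778,4012489,9592036,9592036,4012489,2633778,4012476,9591996,9591703,4011583,2631350,4005984,9574644],[25167383,25213761,25213870,25213870,25213761,25167383,9574644,4005984,2631350,4011583,9591703,9591996,4012476,2633778,4012489,9592036,9592037,4012491,2633784,4012491,9592037,9592036,4012489,2633778,4012476,9591996,9591703,4011583,2631350,4005984,9574644]),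
  ([],[25152976,25199203,25199311,25199203,25152976,9563430,3998648,2625408,4004223,9580424,9580715,4005112,2627824,4005125,9580755,9580755,4005125,2627824,4005112,9580715,9580424,4004223,2625408,3998648,9563430],[25152976,25199203,25199311,25199311,25199203,25152976,9563430,3998648,2625408,4004223,9580424,9580715,4005112,2627824,4005125,9580755,9580756,4005127,2627830,4005127,9580756,9580755,4005125,2627824,4005112,9580715,9580424,4004223,2625408,3998648,9563430]),
  ([],[25138543,25184621,25184728,25184621,25138543,9552203,3991309,2619464,3996860,9569133,9569422,3997744,2621868,3997757,9569462,9569462,3997757,2621868,3997744,9569422,9569133,3996860,2619464,3991309,9552203],[25138543,25184621,25184729,25184729,25184621,25138543,9552203,3991309,2619464,3996860,9569133,9569422,3997744,2621868,3997757,9569462,9569463,3997759,2621874,3997759,9569463,9569462,3997757,2621868,3997744,9569422,9569133,3996860,2619464,3991309,9552203]),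
  ([],[25124062,25169993,25170100,25169993,25124062,9540945,3983954,2613511,3989483,9557812,9558100,3990361,2615903,3990374,9558139,9558139,3990374,2615903,3990361,9558100,9557812,3989483,2613511,3983954,9540945],[25124062,25169993,25170100,25170100,25169993,25124062,9540945,3983954,2613511,3989483,9557812,9558100,3990361,2615903,3990374,9558140,9558140,3990376,2615909,3990376,9558140,9558140,3990374,2615903,3990361,9558100,9557812,3989483,2613511,3983954,9540945]),
  ([],[25109510,25155297,25155404,25155297,25109510,9529640,3976573,2607539,3982079,9546445,9546731,3982953,2609919,3982966,9546770,9546770,3982966,2609919,3982953,9546731,9546445,3982079,2607539,3976573,9529640],[25109510,25155297,25155404,25155404,25155297,25109510,9529640,3976573,2607539,3982079,9546445,9546731,3982953,2609919,3982966,9546770,9546771,3982968,2609925,3982968,9546771,9546770,3982966,2609919,3982953,9546731,9546445,3982079,2607539,3976573,9529640]),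
  ([],[25094866,25140511,25140616,25140511,25094866,9518269,3969155,2601538,3974638,9535014,9535298,3975507,2603908,3975520,9535337,9535337,3975520,2603908,3975507,9535298,9535014,3974638,2601538,3969155,9518269],[25094866,25140511,25140617,25140617,25140511,25094866,9518269,3969155,2601538,3974638,9535014,9535298,3975507,2603908,3975520,9535337,9535338,3975522,2603913,3975522,9535338,9535337,3975520,2603908,3975507,9535298,9535014,3974638,2601538,3969155,9518269]),
  ([],[25080105,25125610,25125715,25125610,25080105,9506816,3961687,2595501,3967149,9523500,9523783,3968013,2597859,3968026,9523822,9523822,3968026,2597859,3968013,9523783,9523500,3967149,2595501,3961687,9506816],[25080105,25125610,25125715,25125715,25125610,25080105,9506816,3961687,2595501,3967149,9523500,9523783,3968013,2597859,3968026,9523822,9523822,3968028,2597864,3968028,9523822,9523822,3968026,2597859,3968013,9523783,9523500,3967149,2595501,3961687,9506816]),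
  ([],[25065204,25110571,25110676,25110571,25065204,9495262,3954160,2589416,3959599,9511886,9512168,3960459,2591763,3960471,9512206,9512206,3960471,2591763,3960459,9512168,9511886,3959599,2589416,3954160,9495262],[25065204,25110571,25110676,25110676,25110571,25065204,9495262,3954160,2589416,3959599,9511886,9512168,3960459,2591763,3960471,9512206,9512207,3960473,2591768,3960473,9512207,9512206,3960471,2591763,3960459,9512168,9511886,3959599,2589416,3954160,9495262]),
  ([],[25050139,25095370,25095473,25095370,25050139,9483588,3946559,2583275,3951976,9500153,9500433,3952832,2585611,3952844,9500471,9500471,3952844,2585611,3952832,9500433,9500153,3951976,2583275,3946559,9483588],[25050139,25095370,25095474,25095474,25095370,25050139,9483588,3946559,2583275,3951976,9500153,9500433,3952832,2585611,3952844,9500471,9500472,3952846,2585616,3952846,9500472,9500471,3952844,2585611,3952832,9500433,9500153,3951976,2583275,3946559,9483588]),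
  ([],[25034883,25079979,25080082,25079979,25034883,9471775,3938872,2577068,3944268,9488281,9488559,3945119,2579392,3945132,9488597,9488597,3945132,2579392,3945119,9488559,9488281,3944268,2577068,3938872,9471775],[25034883,25079979,25080083,25080083,25079979,25034883,9471775,3938872,2577068,3944268,9488281,9488559,3945119,2579392,3945132,9488597,9488598,3945134,2579398,3945134,9488598,9488597,3945132,2579392,3945119,9488559,9488281,3944268,2577068,3938872,9471775]),
  ([],[25019409,25064373,25064476,25064373,25019409,9459801,3931087,2570783,3936462,9476249,9476526,3937308,2573096,3937320,9476563,9476563,3937320,2573096,3937308,9476526,9476249,3936462,2570783,3931087,9459801],[25019409,25064373,25064476,25064476,25064373,25019409,9459801,3931087,2570783,3936462,9476249,9476526,3937308,2573096,3937320,9476563,9476564,3937322,2573102,3937322,9476564,9476563,3937320,2573096,3937308,9476526,9476249,3936462,2570783,3931087,9459801]),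
  ([],[25003690,25048523,25048625,25048523,25003690,9447645,3923190,2564410,3928543,9464036,9464311,3929385,2566712,3929397,9464348,9464348,3929397,2566712,3929385,9464311,9464036,3928543,2564410,3923190,9447645],[25003690,25048523,25048625,25048625,25048523,25003690,9447645,3923190,2564410,3928543,9464036,9464311,3929385,2566712,3929397,9464348,9464349,3929399,2566718,3929399,9464349,9464348,3929397,2566712,3929385,9464311,9464036,3928543,2564410,3923190,9447645]),
  ([],[24987695,25032398,25032499,25032398,24987695,9435285,3915165,2557937,3920497,9451619,9451892,3921335,2560229,3921347,9451929,9451929,3921347,2560229,3921335,9451892,9451619,3920497,2557937,3915165,9435285],[24987695,25032398,25032499,25032499,25032398,24987695,9435285,3915165,2557937,3920497,9451619,9451892,3921335,2560229,3921347,9451929,9451930,3921348,2560234,3921348,9451930,9451929,3921347,2560229,3921335,9451892,9451619,3920497,2557937,3915165,9435285]),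
  ([],[24971392,25015967,25016067,25015967,24971392,9422696,3906998,2551353,3912309,9438973,9439245,3913142,2553633,3913154,9439281,9439281,3913154,2553633,3913142,9439245,9438973,3912309,2551353,3906998,9422696],[24971392,25015967,25016068,25016068,25015967,24971392,9422696,3906998,2551353,3912309,9438973,9439245,3913142,2553633,3913154,9439282,9439282,3913156,2553638,3913156,9439282,9439282,3913154,2553633,3913142,9439245,9438973,3912309,2551353,3906998,9422696]),
  ([],[24954748,24999195,24999295,24999195,24954748,9409852,3898672,2544643,3903962,9426073,9426343,3904791,2546912,3904802,9426380,9426380,3904802,2546912,3904791,9426343,9426073,3903962,2544643,3898672,9409852],[24954748,24999195,24999295,24999295,24999195,24954748,9409852,3898672,2544643,3903962,9426073,9426343,3904791,2546912,3904802,9426380,9426380,3904804,2546917,3904804,9426380,9426380,3904802,2546912,3904791,9426343,9426073,3903962,2544643,3898672,9409852]),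
  ([],[24937725,24982046,24982146,24982046,24937725,9396727,3890170,2537794,3895439,9412891,9413160,3896263,2540052,3896275,9413196,9413196,3896275,2540052,3896263,9413160,9412891,3895439,2537794,3890170,9396727],[24937725,24982046,24982146,24982146,24982046,24937725,9396727,3890170,2537794,3895439,9412891,9413160,3896263,2540052,3896275,9413196,9413196,3896277,2540057,3896277,9413196,9413196,3896275,2540052,3896263,9413160,9412891,3895439,2537794,3890170,9396727]),
  ([],[24920284,24964481,24964580,24964481,24920284,9383289,3881473,2530791,3886721,9399398,9399665,3887540,2533038,3887552,9399701,9399701,3887552,2533038,3887540,9399665,9399398,3886721,2530791,3881473,9383289],[24920284,24964481,24964580,24964580,24964481,24920284,9383289,3881473,2530791,3886721,9399398,9399665,3887540,2533038,3887552,9399701,9399701,3887554,2533043,3887554,9399701,9399701,3887552,2533038,3887540,9399665,9399398,3886721,2530791,3881473,9383289]),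
  ([],[24902384,24946457,24946555,24946457,24902384,9369508,3872561,2523618,3877788,9385561,9385826,3878603,2525854,3878614,9385862,9385862,3878614,2525854,3878603,9385826,9385561,3877788,2523618,3872561,9369508],[24902384,24946457,24946555,24946555,24946457,24902384,9369508,3872561,2523618,3877788,9385561,9385826,3878603,2525854,3878614,9385862,9385862,3878616,2525859,3878616,9385862,9385862,3878614,2525854,3878603,9385826,9385561,3877788,2523618,3872561,9369508]),
  ([],[24883976,24927927,24928024,24927927,24883976,9355348,3863412,2516257,3868618,9371345,9371609,3869428,2518483,3869439,9371644,9371644,3869439,2518483,3869428,9371609,9371345,3868618,2516257,3863412,9355348],[24883976,24927927,24928025,24928025,24927927,24883976,9355348,3863412,2516257,3868618,9371345,9371609,3869428,2518483,3869439,9371644,9371645,3869441,2518487,3869441,9371645,9371644,3869439,2518483,3869428,9371609,9371345,3868618,2516257,3863412,9355348]),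
  ([],[24865011,24908842,24908938,24908842,24865011,9340772,3854002,2508691,3859187,9356714,9356976,3859992,2510905,3860004,9357011,9357011,3860004,2510905,3859992,9356976,9356714,3859187,2508691,3854002,9340772],[24865011,24908842,24908939,24908939,24908842,24865011,9340772,3854002,2508691,3859187,9356714,9356976,3859992,2510905,3860004,9357011,9357011,3860005,2510910,3860005,9357011,9357011,3860004,2510905,3859992,9356976,9356714,3859187,2508691,3854002,9340772]),
  ([],[24845434,24889146,24889242,24889146,24845434,9325737,3844305,2500898,3849469,9341625,9341885,3850270,2503101,3850281,9341920,9341920,3850281,2503101,3850270,9341885,9341625,3849469,2500898,3844305,9325737],[24845434,24889146,24889242,24889242,24889146,24845434,9325737,3844305,2500898,3849469,9341625,9341885,3850270,2503101,3850281,9341920,9341920,3850283,2503106,3850283,9341920,9341920,3850281,2503101,3850270,9341885,9341625,3849469,2500898,3844305,9325737]),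
  ([],[24825184,24868778,24868873,24868778,24825184,9310200,3834292,2492856,3839436,9326033,9326291,3840232,2495048,3840243,9326326,9326326,3840243,2495048,3840232,9326291,9326033,3839436,2492856,3834292,9310200],[24825184,24868778,24868873,24868873,24868778,24825184,9310200,3834292,2492856,3839436,9326033,9326291,3840232,2495048,3840243,9326326,9326326,3840245,2495052,3840245,9326326,9326326,3840243,2495048,3840232,9326291,9326033,3839436,2492856,3834292,9310200]),
  ([],[24804194,24847672,24847767,24847672,24804194,9294110,3823934,2484540,3829056,9309888,9310145,3829847,2486720,3829858,9310179,9310179,3829858,2486720,3829847,9310145,9309888,3829056,2484540,3823934,9294110],[24804194,24847672,24847767,24847767,24847672,24804194,9294110,3823934,2484540,3829056,9309888,9310145,3829847,2486720,3829859,9310179,9310180,3829860,2486725,3829860,9310180,9310179,3829859,2486720,3829847,9310145,9309888,3829056,2484540,3823934,9294110]),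
  ([],[24782389,24825754,24825848,24825754,24782389,9277411,3813194,2475923,3818296,9293135,9293390,3819082,2478092,3819093,9293424,9293424,3819093,2478092,3819082,9293390,9293135,3818296,2475923,3813194,9277411],[24782389,24825754,24825848,24825848,24825754,24782389,9277411,3813194,2475923,3818296,9293135,9293390,3819082,2478092,3819093,9293424,9293425,3819095,2478097,3819095,9293425,9293424,3819093,2478092,3819082,9293390,9293135,3818296,2475923,3813194,9277411]),
  ([],[24759687,24802941,24803034,24802941,24759687,9260042,3802035,2466975,3807116,9275713,9275966,3807898,2469133,3807909,9276000,9276000,3807909,2469133,3807898,9275966,9275713,3807116,2466975,3802035,9260042],[24759687,24802941,24803034,24803034,24802941,24759687,9260042,3802035,2466975,3807116,9275713,9275966,3807898,2469133,3807909,9276000,9276001,3807910,2469138,3807910,9276001,9276000,3807909,2469133,3807898,9275966,9275713,3807116,2466975,3802035,9260042]),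
  ([],[24735995,24779142,24779234,24779142,24735995,9241935,3790415,2457663,3795475,9257553,9257805,3796252,2459809,3796262,9257838,9257838,3796262,2459809,3796252,9257805,9257553,3795475,2457663,3790415,9241935],[24735995,24779142,24779234,24779234,24779142,24735995,9241935,3790415,2457663,3795475,9257553,9257805,3796252,2459809,3796262,9257838,9257839,3796264,2459814,3796264,9257839,9257838,3796262,2459809,3796252,9257805,9257553,3795475,2457663,3790415,9241935]),
  ([],[24711211,24754253,24754344,24754253,24711211,9223013,3778285,2447949,3783324,9238579,9238829,3784096,2450083,3784107,9238862,9238862,3784107,2450083,3784096,9238829,9238579,3783324,2447949,3778285,9223013],[24711211,24754253,24754345,24754345,24754253,24711211,9223013,3778285,2447949,3783324,9238579,9238829,3784096,2450083,3784107,9238862,9238863,3784109,2450088,3784109,9238863,9238862,3784107,2450083,3784096,9238829,9238579,3783324,2447949,3778285,9223013]),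
  ([],[24685216,24728158,24728249,24728158,24685216,9203190,3765593,2437791,3770612,9218705,9218953,3771379,2439914,3771389,9218986,9218986,3771389,2439914,3771379,9218953,9218705,3770612,2437791,3765593,9203190],[24685216,24728158,24728249,24728249,24728158,24685216,9203190,3765593,2437791,3770612,9218705,9218953,3771379,2439914,3771389,9218986,9218986,3771391,2439918,3771391,9218986,9218986,3771389,2439914,3771379,9218953,9218705,3770612,2437791,3765593,9203190]),
  ([],[24657879,24700727,24700817,24700727,24657879,9182369,3752278,2427142,3757276,9197833,9198079,3758038,2429254,3758049,9198112,9198112,3758049,2429254,3758038,9198079,9197833,3757276,2427142,3752278,9182369],[24657879,24700727,24700817,24700817,24700727,24657879,9182369,3752278,2427142,3757276,9197833,9198079,3758038,2429254,3758049,9198112,9198112,3758050,2429258,3758050,9198112,9198112,3758049,2429254,3758038,9198079,9197833,3757276,2427142,3752278,9182369]),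
  ([],[24629050,24671809,24671898,24671809,24629050,9160438,3738273,2415950,3743251,9175853,9176098,3744008,2418050,3744018,9176130,9176130,3744018,2418050,3744008,9176098,9175853,3743251,2415950,3738273,9160438],[24629050,24671809,24671898,24671898,24671809,24629050,9160438,3738273,2415950,3743251,9175853,9176098,3744008,2418050,3744018,9176130,9176131,3744020,2418054,3744020,9176131,9176130,3744018,2418050,3744008,9176098,9175853,3743251,2415950,3738273,9160438]),
  ([],[24598558,24641235,24641323,24641235,24598558,9137273,3723499,2404153,3728457,9152641,9152883,3729209,2406241,3729219,9152915,9152915,3729219,2406241,3729209,9152883,9152641,3728457,2404153,3723499,9137273],[24598558,24641235,24641323,24641323,24641235,24598558,9137273,3723499,2404153,3728457,9152641,9152883,3729209,2406241,3729219,9152915,9152916,3729221,2406245,3729221,9152916,9152915,3729219,2406241,3729209,9152883,9152641,3728457,2404153,3723499,9137273]),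
  ([],[24566203,24608808,24608896,24608808,24566203,9112728,3707869,2391683,3712808,9128051,9128292,3713555,2393759,3713565,9128323,9128323,3713565,2393759,3713555,9128292,9128051,3712808,2391683,3707869,9112728],[24566203,24608808,24608896,24608896,24608808,24566203,9112728,3707869,2391683,3712808,9128051,9128292,3713555,2393759,3713565,9128323,9128324,3713566,2393763,3713566,9128324,9128323,3713565,2393759,3713555,9128292,9128051,3712808,2391683,3707869,9112728]),
  ([],[24531760,24574304,24574391,24574304,24531760,9086637,3691281,2378460,3696201,9101919,9102157,3696943,2380525,3696953,9102188,9102188,3696953,2380525,3696943,9102157,9101919,3696201,2378460,3691281,9086637],[24531760,24574304,24574391,24574391,24574304,24531760,9086637,3691281,2378460,3696201,9101919,9102157,3696943,2380525,3696953,9102189,9102189,3696954,2380529,3696954,9102189,9102189,3696953,2380525,3696943,9102157,9101919,3696201,2378460,3691281,9086637]),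
  ([],[24494963,24537460,24537546,24537460,24494963,9058808,3673618,2364393,3678520,9074051,9074288,3679256,2366447,3679266,9074319,9074319,3679266,2366447,3679256,9074288,9074051,3678520,2364393,3673618,9058808],[24494963,24537460,24537546,24537546,24537460,24494963,9058808,3673618,2364393,3678520,9074051,9074288,3679256,2366447,3679266,9074319,9074320,3679268,2366451,3679268,9074320,9074319,3679266,2366447,3679256,9074288,9074051,3678520,2364393,3673618,9058808]),
  ([],[24455503,24497970,24498055,24497970,24455503,9029017,3654743,2349377,3659628,9044226,9044461,3660359,2351419,3660369,9044492,9044492,3660369,2351419,3660359,9044461,9044226,3659628,2349377,3654743,9029017],[24455503,24497970,24498055,24498055,24497970,24455503,9029017,3654743,2349377,3659628,9044226,9044461,3660359,2351420,3660369,9044492,9044492,3660371,2351424,3660371,9044492,9044492,3660369,2351420,3660359,9044461,9044226,3659628,2349377,3654743,9029017]),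
  ([],[24413017,24455475,24455559,24455475,24413017,8996999,3634497,2333289,3639367,9012181,9012414,3640093,2335320,3640103,9012444,9012444,3640103,2335320,3640093,9012414,9012181,3639367,2333289,3634497,8996999],[24413017,24455475,24455559,24455559,24455475,24413017,8996999,3634497,2333289,3639367,9012181,9012414,3640093,2335320,3640103,9012444,9012445,3640104,2335324,3640104,9012445,9012444,3640103,2335320,3640093,9012414,9012181,3639367,2333289,3634497,8996999]),
  ([],[24367072,24409548,24409632,24409548,24367072,8962445,3612693,2315983,3617549,8977607,8977838,3618271,2318003,3618280,8977868,8977868,3618280,2318003,3618271,8977838,8977607,3617549,2315983,3612693,8962445],[24367072,24409548,24409632,24409632,24409548,24367072,8962445,3612693,2315983,3617549,8977607,8977838,3618271,2318003,3618280,8977868,8977868,3618281,2318007,3618281,8977868,8977868,3618280,2318003,3618271,8977838,8977607,3617549,2315983,3612693,8962445]),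
  ([],[24317154,24359683,24359765,24359683,24317154,8924984,3589108,2297288,3593954,8940135,8940365,3594670,2299299,3594680,8940394,8940394,3594680,2299299,3594670,8940365,8940135,3593954,2297288,3589108,8924984],[24317154,24359683,24359765,24359765,24359683,24317154,8924984,3589108,2297288,3593954,8940135,8940365,3594670,2299299,3594680,8940394,8940394,3594681,2299303,3594681,8940394,8940394,3594680,2299299,3594670,8940365,8940135,3593954,2297288,3589108,8924984]),
  ([],[24262643,24305267,24305348,24305267,24262643,8884173,3563479,2277001,3568317,8899326,8899553,3569029,2279003,3569038,8899582,8899582,3569038,2279003,3569029,8899553,8899326,3568317,2277001,3563479,8884173],[24262643,24305267,24305349,24305349,24305267,24262643,8884173,3563479,2277001,3568317,8899326,8899553,3569029,2279003,3569038,8899582,8899583,3569039,2279007,3569039,8899583,8899582,3569038,2279003,3569029,8899553,8899326,3568317,2277001,3563479,8884173]),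
  ([],[24202785,24245558,24245639,24245558,24202785,8839474,3535485,2254877,3540320,8854646,8854871,3541027,2256872,3541036,8854900,8854900,3541036,2256872,3541027,8854871,8854646,3540320,2254877,3535485,8839474],[24202785,24245558,24245639,24245639,24245558,24202785,8839474,3535485,2254877,3540320,8854646,8854871,3541027,2256872,3541036,8854900,8854900,3541038,2256876,3541038,8854900,8854900,3541036,2256872,3541027,8854871,8854646,3540320,2254877,3535485,8839474]),
  ([],[24136655,24179648,24179728,24179648,24136655,8790233,3504739,2230621,3509576,8805444,8805668,3510280,2232609,3510289,8805696,8805696,3510289,2232609,3510280,8805668,8805444,3509576,2230621,3504739,8790233],[24136655,24179648,24179728,24179728,24179648,24136655,8790233,3504739,2230621,3509576,8805444,8805668,3510280,2232610,3510289,8805696,8805696,3510290,2232613,3510290,8805696,8805696,3510289,2232610,3510280,8805668,8805444,3509576,2230621,3504739,8790233]),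
  ([],[24063102,24106407,24106486,24106407,24063102,8735640,3470766,2203870,3475613,8750917,8751139,3476314,2205855,3476322,8751167,8751167,3476322,2205855,3476314,8751139,8750917,3475613,2203870,3470766,8735640],[24063102,24106407,24106486,24106486,24106407,24063102,8735640,3470766,2203870,3475613,8750917,8751139,3476314,2205855,3476322,8751167,8751168,3476324,2205859,3476324,8751168,8751167,3476322,2205855,3476314,8751139,8750917,3475613,2203870,3470766,8735640]),
  ([],[23980684,24024421,24024499,24024421,23980684,8674684,3432976,2174178,3437843,8690064,8690285,3438541,2176163,3438550,8690312,8690312,3438550,2176163,3438541,8690285,8690064,3437843,2174178,3432976,8674684],[23980684,24024421,24024500,24024500,24024421,23980684,8674684,3432976,2174178,3437843,8690064,8690285,3438541,2176163,3438550,8690312,8690313,3438551,2176166,3438551,8690313,8690312,3438550,2176163,3438541,8690285,8690064,3437843,2174178,3432976,8674684]),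
  ([],[23887558,23931888,23931966,23931888,23887558,8606085,3390629,2140987,3395529,8621617,8621836,3396226,2142976,3396235,8621864,8621864,3396235,2142976,3396226,8621836,8621617,3395529,2140987,3390629,8606085],[23887558,23931888,23931966,23931966,23931888,23887558,8606085,3390629,2140987,3395529,8621617,8621836,3396226,2142976,3396235,8621864,8621864,3396236,2142979,3396236,8621864,8621864,3396235,2142976,3396226,8621836,8621617,3395529,2140987,3390629,8606085]),
  ([],[23781342,23826481,23826558,23826481,23781342,8528201,3342783,2103591,3347735,8543950,8544169,3348432,2105589,3348440,8544196,8544196,3348440,2105589,3348432,8544169,8543950,3347735,2103591,3342783,8528201],[23781342,23826481,23826558,23826558,23826481,23781342,8528201,3342783,2103591,3347735,8543950,8544169,3348432,2105589,3348440,8544196,8544197,3348441,2105593,3348441,8544197,8544196,3348440,2105589,3348432,8544169,8543950,3347735,2103591,3342783,8528201]),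
  ([],[23658894,23705139,23705216,23705139,23658894,8438887,3288221,2061085,3293250,8454944,8455163,3293950,2063101,3293958,8455190,8455190,3293958,2063101,3293950,8455163,8454944,3293250,2061085,3288221,8438887],[23658894,23705139,23705216,23705216,23705139,23658894,8438887,3288221,2061085,3293250,8454944,8455163,3293950,2063101,3293958,8455190,8455190,3293959,2063104,3293959,8455190,8455190,3293958,2063101,3293950,8455163,8454944,3293250,2061085,3288221,8438887]),
  ([],[23515990,23563757,23563834,23563757,23515990,8335291,3225347,2012287,3230487,8351782,8352002,3231193,2014332,3231201,8352029,8352029,3231201,2014332,3231193,8352002,8351782,3230487,2012287,3225347,8335291],[23515990,23563757,23563834,23563834,23563757,23515990,8335291,3225347,2012287,3230487,8351782,8352002,3231193,2014332,3231201,8352029,8352029,3231202,2014336,3231202,8352029,8352029,3231201,2014332,3231193,8352002,8351782,3230487,2012287,3225347,8335291]),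
  ([],[23346813,23396696,23396773,23396696,23346813,8213537,3152020,1955634,3157322,8230642,8230864,3158039,1957724,3158047,8230890,8230890,3158047,1957724,3158039,8230864,8230642,3157322,1955634,3152020,8213537],[23346813,23396696,23396774,23396774,23396696,23346813,8213537,3152020,1955634,3157322,8230642,8230864,3158039,1957724,3158047,8230891,8230891,3158048,1957727,3158048,8230891,8230891,3158047,1957724,3158039,8230864,8230642,3157322,1955634,3152020,8213537]),
  ([],[23143132,23196003,23196081,23196003,23143132,8068224,3065316,1889008,3070851,8086204,8086430,3071585,1891167,3071593,8086457,8086457,3071593,1891167,3071585,8086430,8086204,3070851,1889008,3065316,8068224],[23143132,23196003,23196081,23196081,23196003,23143132,8068224,3065316,1889008,3070851,8086204,8086430,3071585,1891167,3071593,8086457,8086457,3071595,1891170,3071595,8086457,8086457,3071593,1891167,3071585,8086430,8086204,3070851,1889008,3065316,8068224]),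
  ([],[22892905,22950087,22950166,22950087,22892905,7891604,2961130,1809485,2967005,7910851,7911083,2967765,1811745,2967773,7911110,7911110,2967773,1811745,2967765,7911083,7910851,2967005,1809485,2961130,7891604],[22892905,22950087,22950166,22950166,22950087,22892905,7891604,2961130,1809485,2967005,7910851,7911083,2967765,1811745,2967773,7911110,7911110,2967774,1811748,2967774,7911110,7911110,2967773,1811745,2967765,7911083,7910851,2967005,1809485,2961130,7891604]),
  ([],[22577814,22641385,22641466,22641385,22577814,7672170,2833538,1712923,2839914,7693288,7693530,2840715,1715334,2840723,7693557,7693557,2840723,1715334,2840715,7693530,7693288,2839914,1712923,2833538,7672170],[22577814,22641385,22641466,22641466,22641385,22577814,7672170,2833538,1712923,2839914,7693288,7693530,2840715,1715334,2840723,7693557,7693557,2840724,1715337,2840724,7693557,7693557,2840723,1715334,2840715,7693530,7693288,2839914,1712923,2833538,7672170]),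
  ([],[22168591,22241978,22242063,22241978,22168591,7392102,2673708,1593304,2680837,7416061,7416317,2681697,1595940,2681706,7416345,7416345,2681706,1595940,2681697,7416317,7416061,2680837,1593304,2673708,7392102],[22168591,22241978,22242063,22242063,22241978,22168591,7392102,2673708,1593304,2680837,7416061,7416317,2681697,1595940,2681706,7416345,7416345,2681707,1595943,2681707,7416345,7416345,2681706,1595940,2681697,7416317,7416061,2680837,1593304,2673708,7392102]),
  ([],[21615509,21704700,21704789,21704700,21615509,7022369,2467980,1441665,2476268,7050792,7051068,2477215,1444637,2477223,7051097,7051097,2477223,1444637,2477215,7051068,7050792,2476268,1441665,2467980,7022369],[21615509,21704700,21704789,21704789,21704700,21615509,7022369,2467980,1441665,2476268,7050792,7051068,2477215,1444637,2477223,7051097,7051097,2477224,1444640,2477224,7051097,7051097,2477223,1444637,2477215,7051068,7050792,2476268,1441665,2467980,7022369]),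
  ([],[20826996,20943254,20943348,20943254,20826996,6512594,2194407,1244426,2204520,6548344,6548645,2205586,1247892,2205594,6548674,6548674,2205594,1247892,2205586,6548645,6548344,2204520,1244426,2194407,6512594],[20826996,20943254,20943348,20943348,20943254,20826996,6512594,2194407,1244426,2204520,6548344,6548645,2205586,1247892,2205594,6548674,6548674,2205595,1247895,2205595,6548674,6548674,2205594,1247892,2205586,6548645,6548344,2204520,1244426,2194407,6512594]),
  ([],[19614903,19781549,19781644,19781549,19614903,5768317,1816696,981431,1829711,5816673,5816998,1830916,985584,1830923,5817025,5817025,1830923,985584,1830916,5816998,5816673,1829711,981431,1816696,5768317],[19614903,19781549,19781644,19781644,19781549,19614903,5768317,1816696,981431,1829711,5816673,5816998,1830916,985584,1830923,5817025,5817026,1830924,985587,1830924,5817026,5817025,1830923,985584,1830916,5816998,5816673,1829711,981431,1816696,5768317]),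
  ([],[17526410,17797628,17797709,17797628,17526410,4596006,1276988,628466,1294221,4666511,4666818,1295475,633293,1295481,4666839,4666839,1295481,633293,1295475,4666818,4666511,1294221,628466,1276988,4596006],[17526410,17797628,17797709,17797709,17797628,17526410,4596006,1276988,628466,1294221,4666511,4666818,1295475,633293,1295481,4666839,4666839,1295481,633294,1295481,4666839,4666839,1295481,633293,1295475,4666818,4666511,1294221,628466,1276988,4596006]),
  ([],[13152718,13678810,13678840,13678810,13152718,2581468,525318,201955,544749,2684425,2684571,545524,205915,545525,2684577,2684577,545525,205915,545524,2684571,2684425,544749,201955,525318,2581468],[13152718,13678810,13678840,13678840,13678810,13152718,2581468,525318,201955,544749,2684425,2684571,545524,205915,545525,2684577,2684577,545525,205915,545525,2684577,2684577,545525,205915,545524,2684571,2684425,544749,201955,525318,2581468])]"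

definition cert_rows :: "cert_row list" where
  "cert_rows = cert_table @ [([], [], [])]"

lemma cert_chain_iff:
  "cert_chain b xs \<longleftrightarrow> (\<forall>j. Suc j < length xs \<longrightarrow> cert_level (b \<and> j = 0) (xs ! j) (xs ! Suc j))"
proof (induction b xs rule: cert_chain.induct)
  case (1 b a c rows)
  show ?case
    unfolding cert_chain.simps(1) 1 by (auto simp: less_Suc_eq_0_disj)
qed auto

lemma cert_chain_take_drop:
  assumes "cert_chain b (take n xs)" and "cert_chain False (drop m xs)" and "0 < m" and "m < n"
  shows "cert_chain b xs"
  unfolding cert_chain_iff
proof (intro allI impI)
  fix j
  assume "Suc j < length xs"
  show "cert_level (b \<and> j = 0) (xs ! j) (xs ! Suc j)"
  proof (cases "Suc j < n")
    case True
    then show ?thesis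
      using assms(1) \<open>Suc j < length xs\<close> by (auto simp: cert_chain_iff)
  next
    case False
    then have "m \<le> j" and "j \<noteq> 0"
      using assms(3,4) by auto
    have "\<forall>i. Suc i < length xs - m \<longrightarrow> cert_level False (xs ! (m + i)) (xs ! Suc (m + i))"
      using assms(2) by (simp add: cert_chain_iff)
    then have "Suc (j - m) < length xs - m \<longrightarrow> cert_level False (xs ! (m + (j - m))) (xs ! Suc (m + (j - m)))"
      by (rule spec)
    then have "cert_level False (xs ! j) (xs ! Suc j)"
      using \<open>m \<le> j\<close> \<open>Suc j < length xs\<close> by simp
    then show ?thesis
      using \<open>j \<noteq> 0\<close> by simp
  qed
qed

text \<open>The table is checked in blocks of 16 rows, overlapping in one row, so that the
  evaluations can run in parallel.\<close>
lemma cert_chain_block_0: "cert_chain True (take 16 cert_rows)"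
  by code_simp

lemma cert_chain_block_1: "cert_chain False (take 16 (drop 15 cert_rows))"
  by code_simp

lemma cert_chain_block_2: "cert_chain False (take 16 (drop 30 cert_rows))"
  by code_simp

lemma cert_chain_block_3: "cert_chain False (take 16 (drop 45 cert_rows))"
  by code_simp

lemma cert_chain_block_4: "cert_chain False (take 16 (drop 60 cert_rows))"
  by code_simp

lemma cert_chain_block_5: "cert_chain False (take 16 (drop 75 cert_rows))"
  by code_simp

lemma cert_chain_block_6: "cert_chain False (take 16 (drop 90 cert_rows))"
  by code_simp

lemma cert_chain_block_7: "cert_chain False (drop 105 cert_rows)"
  by code_simp

lemma cert_chain_cert_rows: "cert_chain True cert_rows"
proof -
  have "cert_chain False (drop 90 cert_rows)"
    using cert_chain_take_drop[OF cert_chain_block_6 _, of 15] cert_chain_block_7 by simp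
  then have "cert_chain False (drop 75 cert_rows)"
    using cert_chain_take_drop[OF cert_chain_block_5 _, of 15] by simp
  then have "cert_chain False (drop 60 cert_rows)"
    using cert_chain_take_drop[OF cert_chain_block_4 _, of 15] by simp
  then have "cert_chain False (drop 45 cert_rows)"
    using cert_chain_take_drop[OF cert_chain_block_3 _, of 15] by simp
  then have "cert_chain False (drop 30 cert_rows)"
    using cert_chain_take_drop[OF cert_chain_block_2 _, of 15] by simp
  then have "cert_chain False (drop 15 cert_rows)"
    using cert_chain_take_drop[OF cert_chain_block_1 _, of 15] by simp
  then show ?thesis
    using cert_chain_take_drop[OF cert_chain_block_0 _, of 15] by simp
qed

section \<open>The test function\<close>

definition cert_row :: "nat \<Rightarrow> cert_row" where
  "cert_row n = nth_default ([], [], []) cert_table n"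

definition cert_value :: "nat \<Rightarrow> site \<Rightarrow> real" where
  "cert_value n e = (if site_ok e
     then nth_default 0 (row_values (cert_row n) (fst e)) (position_index (fst e) (snd (snd e))) / 2 ^ 26
     else 0)"

definition test_fun :: "site list \<Rightarrow> real" where
  "test_fun v = (if valid_state v \<and> v \<noteq> [] then \<Prod>n<length v. cert_value n (v ! n) else 0)"

definition cert_lambda :: real where
  "cert_lambda = 52985 / 10000"

text \<open>Popping the last site divides the test function by its factor; from depth 0 it
  reaches the empty state, where the test function vanishes.\<close>
definition move_weight :: "nat \<Rightarrow> site \<Rightarrow> move_kind \<Rightarrow> real" where
  "move_weight n e a = (case a of
     Inside e' \<Rightarrow> cert_value n e'
   | Pop \<Rightarrow> (if n = 0 then 0 else 1)
   | Push e' \<Rightarrow> cert_value n e * cert_value (Suc n) e')"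

lemma cert_level_Nil: "cert_level b ([], [], []) c"
  by (simp add: cert_level_def cert_ineq_def row_values_def list_all_iff)

lemma cert_level_cert_row: "cert_level (n = 0) (cert_row n) (cert_row (Suc n))"
proof (cases "n < length cert_table")
  case True
  then have "cert_level (n = 0) (cert_rows ! n) (cert_rows ! Suc n)"
    using cert_chain_cert_rows by (simp add: cert_chain_iff cert_rows_def)
  then show ?thesis
    using True by (cases "Suc n < length cert_table")
      (simp_all add: cert_row_def cert_rows_def nth_default_def nth_append)
next
  case False
  then show ?thesis
    by (simp add: cert_row_def nth_default_def cert_level_Nil)
qed

lemma site_ok_fan_positions:
  assumes "site_ok (k, r, i, j)"
  shows "k \<in> set [4, 5, 7]" and "(i, j) \<in> set (fan_positions k)"
  using assms by (auto simp: site_ok_def fan_positions_def image_iff Bex_def)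

lemma cert_ineq_site:
  assumes "site_ok (k, r, i, j)"
  shows "cert_ineq (n = 0) (cert_row n) (cert_row (Suc n)) k (i, j)"
  using cert_level_cert_row[of n] site_ok_fan_positions[OF assms]
  by (auto simp: cert_level_def list_all_iff)

lemma cert_value_nonneg: "0 \<le> cert_value n e"
  using cert_ineq_site[of "fst e" "fst (snd e)" "fst (snd (snd e))" "snd (snd (snd e))" n]
  by (cases e) (simp add: cert_value_def cert_ineq_def Let_def)

lemma cert_ineq_real:
  fixes x S D :: int
  assumes "52985 * 2 ^ 26 * x \<le> 10000 * (2 ^ 26 * S + (if P then 2 ^ 52 else 0) + x * D)"
  shows "cert_lambda * (x / 2 ^ 26) \<le> (if P then 1 else 0) + S / 2 ^ 26 + x / 2 ^ 26 * (D / 2 ^ 26)"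
proof -
  have "real_of_int (52985 * 2 ^ 26 * x)
      \<le> real_of_int (10000 * (2 ^ 26 * S + (if P then 2 ^ 52 else 0) + x * D))"
    using assms by (simp only: of_int_le_iff)
  then show ?thesis
    by (cases P) (simp_all add: cert_lambda_def field_simps)
qed

lemma sum_inside_moves:
  assumes "site_ok (k, r, i, j)"
  shows "(\<Sum>p\<leftarrow>inside_moves (k, r, i, j). H (snd p))
    = (if j = 0 then H Pop else 0) + (\<Sum>q\<leftarrow>inside_neighbours k (i, j). H (Inside (k, r, fst q, snd q)))"
  by (cases "j = 0"; cases "i < k"; cases "0 < i") (auto simp: inside_moves_def inside_neighbours_def)

lemma site_ok_inside_neighbours:
  assumes "site_ok (k, r, i, j)" and "q \<in> set (inside_neighbours k (i, j))"
  shows "site_ok (k, r, fst q, snd q)"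
  using assms by (cases "j = 0") (auto simp: site_ok_def inside_neighbours_def split: if_splits)

lemma sum_list_of_int_divide: "(\<Sum>x\<leftarrow>xs. of_int (f x) / c) = of_int (\<Sum>x\<leftarrow>xs. f x) / (c :: real)"
  by (induction xs) (simp_all add: add_divide_distrib)

lemma sum_move_weight_Inside:
  assumes "site_ok (k, r, i, j)"
  shows "(\<Sum>q\<leftarrow>inside_neighbours k (i, j). move_weight n e (Inside (k, r, fst q, snd q)))
    = of_int (\<Sum>q\<leftarrow>inside_neighbours k (i, j).
        nth_default 0 (row_values (cert_row n) k) (position_index k q)) / 2 ^ 26"
proof -
  have "(\<Sum>q\<leftarrow>inside_neighbours k (i, j). move_weight n e (Inside (k, r, fst q, snd q)))
      = (\<Sum>q\<leftarrow>inside_neighbours k (i, j).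
          of_int (nth_default 0 (row_values (cert_row n) k) (position_index k q)) / 2 ^ 26)"
  proof (rule arg_cong[where f = sum_list], rule map_cong)
    fix q
    assume "q \<in> set (inside_neighbours k (i, j))"
    then have "site_ok (k, r, fst q, snd q)"
      by (rule site_ok_inside_neighbours[OF assms])
    then show "move_weight n e (Inside (k, r, fst q, snd q))
        = of_int (nth_default 0 (row_values (cert_row n) k) (position_index k q)) / 2 ^ 26"
      by (simp add: move_weight_def cert_value_def)
  qed simp
  then show ?thesis
    by (simp add: sum_list_of_int_divide)
qed

lemma sum_move_weight_Push:
  assumes "site_ok e"
  defines "k' \<equiv> fst (child_fan e)" and "r' \<equiv> snd (child_fan e)"
  shows "(\<Sum>t<Suc k'. move_weight n e (Push (k', r', t, 0)))
    = cert_value n e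
      * (of_int (\<Sum>t\<leftarrow>[0..<k' + 1]. nth_default 0 (row_values (cert_row (Suc n)) k') t) / 2 ^ 26)"
proof -
  have "k' = 4 \<or> k' = 5" and "r' < 8"
    using site_ok_child_fan[OF assms(1)] by (auto simp: k'_def r'_def)
  have "(\<Sum>t<Suc k'. move_weight n e (Push (k', r', t, 0)))
      = (\<Sum>t<Suc k'. cert_value n e * (of_int (nth_default 0 (row_values (cert_row (Suc n)) k') t) / 2 ^ 26))"
  proof (rule sum.cong[OF HOL.refl])
    fix t
    assume "t \<in> {..<Suc k'}"
    then have "site_ok (k', r', t, 0)"
      using \<open>k' = 4 \<or> k' = 5\<close> \<open>r' < 8\<close> by (auto simp: site_ok_def)
    then show "move_weight n e (Push (k', r', t, 0))
        = cert_value n e * (of_int (nth_default 0 (row_values (cert_row (Suc n)) k') t) / 2 ^ 26)"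
      by (simp add: move_weight_def cert_value_def position_index_def)
  qed
  also have "\<dots> = cert_value n e
      * (\<Sum>t\<leftarrow>[0..<Suc k']. of_int (nth_default 0 (row_values (cert_row (Suc n)) k') t) / 2 ^ 26)"
    by (simp only: sum_distrib_left[symmetric] lessThan_atLeast0 atLeastLessThan_upt
        sum_set_upt_conv_sum_list_nat)
  finally show ?thesis
    by (simp only: sum_list_of_int_divide Suc_eq_plus1)
qed

lemma move_weight_sum_ge:
  assumes "site_ok e"
  shows "cert_lambda * cert_value n e \<le> (\<Sum>s\<in>UNIV. move_weight n e (site_move e s))"
proof -
  obtain k r i j where e: "e = (k, r, i, j)"
    by (cases e)
  have ok: "site_ok (k, r, i, j)"
    using assms by (simp add: e)
  define k' where "k' = child_width k (i, j)"
  define x where "x = nth_default 0 (row_values (cert_row n) k) (position_index k (i, j))"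
  define S where
    "S = (\<Sum>q\<leftarrow>inside_neighbours k (i, j). nth_default 0 (row_values (cert_row n) k) (position_index k q))"
  define D where "D = (\<Sum>t\<leftarrow>[0..<k' + 1]. nth_default 0 (row_values (cert_row (Suc n)) k') t)"
  have "fst (child_fan e) = k'"
    by (simp add: e child_fan_def k'_def)
  have value_e: "cert_value n e = x / 2 ^ 26"
    using assms by (simp add: cert_value_def e x_def)
  have "cert_ineq (n = 0) (cert_row n) (cert_row (Suc n)) k (i, j)"
    by (rule cert_ineq_site[OF ok])
  then have "52985 * 2 ^ 26 * x \<le> 10000 * (2 ^ 26 * S + (if j = 0 \<and> n \<noteq> 0 then 2 ^ 52 else 0) + x * D)"
    by (simp add: cert_ineq_def Let_def x_def S_def D_def k'_def)
  then have "cert_lambda * (x / 2 ^ 26)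
      \<le> (if j = 0 \<and> n \<noteq> 0 then 1 else 0) + S / 2 ^ 26 + x / 2 ^ 26 * (D / 2 ^ 26)"
    by (rule cert_ineq_real)
  also have "\<dots> = (\<Sum>s\<in>UNIV. move_weight n e (site_move e s))"
  proof -
    have "(\<Sum>s\<in>UNIV. move_weight n e (site_move e s))
        = (if j = 0 then move_weight n e Pop else 0) + S / 2 ^ 26 + cert_value n e * (D / 2 ^ 26)"
      unfolding sum_site_move[OF assms] sum_inside_moves[OF ok, folded e] sum_move_weight_Inside[OF ok]
        sum_move_weight_Push[OF assms, unfolded \<open>fst (child_fan e) = k'\<close>] \<open>fst (child_fan e) = k'\<close>
        S_def D_def ..
    then show ?thesis
      by (simp add: value_e move_weight_def)
  qed
  finally show ?thesis
    by (simp add: value_e)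
qed

lemma test_fun_snoc:
  assumes "valid_state (v @ [e])"
  shows "test_fun (v @ [e]) = (if v = [] then 1 else test_fun v) * cert_value (length v) e"
proof -
  have "valid_state v"
    using assms valid_from_append_left by (auto simp: valid_state_def)
  moreover have "(\<Prod>n<length (v @ [e]). cert_value n ((v @ [e]) ! n))
      = (\<Prod>n<length v. cert_value n (v ! n)) * cert_value (length v) e"
    by (simp add: nth_append)
  ultimately show ?thesis
    using assms by (simp add: test_fun_def)
qed

lemma test_fun_nonneg: "0 \<le> test_fun v"
  by (simp add: test_fun_def prod_nonneg cert_value_nonneg)

lemma test_fun_state_move:
  assumes "valid_state (v @ [e])"
  shows "test_fun (state_move (v @ [e]) s)
    = (if v = [] then 1 else test_fun v) * move_weight (length v) e (site_move e s)"
proof (cases "site_move e s")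
  case (Inside e')
  then have "state_move (v @ [e]) s = v @ [e']"
    by (simp add: state_move_snoc)
  then show ?thesis
    using Inside test_fun_snoc valid_state_move[OF assms, of s] by (simp add: move_weight_def)
next
  case Pop
  then show ?thesis
    by (simp add: state_move_snoc move_weight_def test_fun_def)
next
  case (Push e')
  then have "state_move (v @ [e]) s = (v @ [e]) @ [e']"
    by (simp add: state_move_snoc)
  then show ?thesis
    using Push test_fun_snoc[OF assms] test_fun_snoc[of "v @ [e]" e'] valid_state_move[OF assms, of s]
    by (simp add: move_weight_def)
qed

lemma test_fun_superharmonic:
  assumes "valid_state v"
  shows "cert_lambda * test_fun v \<le> (\<Sum>s\<in>UNIV. test_fun (state_move v s))"
proof (cases "v = []")
  case True
  then show ?thesis
    by (simp add: test_fun_def[of "[]"] sum_nonneg test_fun_nonneg)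
next
  case False
  then obtain u e where v: "v = u @ [e]"
    by (metis append_butlast_last_id)
  define b where "b = (if u = [] then 1 else test_fun u)"
  have "0 \<le> b"
    by (simp add: b_def test_fun_nonneg)
  have "site_ok e"
    using assms by (simp add: v valid_state_def valid_from_snoc)
  have "cert_lambda * test_fun v = b * (cert_lambda * cert_value (length u) e)"
    using assms by (simp add: v b_def test_fun_snoc)
  also have "\<dots> \<le> b * (\<Sum>s\<in>UNIV. move_weight (length u) e (site_move e s))"
    using move_weight_sum_ge[OF \<open>site_ok e\<close>] \<open>0 \<le> b\<close> by (rule mult_left_mono)
  also have "\<dots> = (\<Sum>s\<in>UNIV. test_fun (state_move v s))"
    using assms by (simp add: v b_def test_fun_state_move sum_distrib_left)
  finally show ?thesis .
qed

lemma test_fun_support_subset: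
  "{v. test_fun v \<noteq> 0} \<subseteq> {v. set v \<subseteq> {e. site_ok e} \<and> length v \<le> length cert_table}"
proof
  fix v
  assume "v \<in> {v. test_fun v \<noteq> 0}"
  then have valid: "valid_state v" and "v \<noteq> []" and nonzero: "(\<Prod>n<length v. cert_value n (v ! n)) \<noteq> 0"
    by (auto simp: test_fun_def split: if_splits)
  have "set v \<subseteq> {e. site_ok e}"
  proof -
    have "valid_from B w \<Longrightarrow> e \<in> set w \<Longrightarrow> site_ok e" for B w e
      by (induction B w rule: valid_from.induct) auto
    then show ?thesis
      using valid by (auto simp: valid_state_def)
  qed
  moreover have "length v \<le> length cert_table"
  proof (rule ccontr)
    assume "\<not> length v \<le> length cert_table"
    then have "\<not> length v - 1 < length cert_table"
      by linarith
    then have "cert_row (length v - 1) = ([], [], [])"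
      unfolding cert_row_def nth_default_def by (simp only: if_False)
    then have "cert_value (length v - 1) (v ! (length v - 1)) = 0"
      by (simp add: cert_value_def row_values_def)
    then show False
      using nonzero \<open>v \<noteq> []\<close>
      by (metis diff_less length_greater_0_conv lessThan_iff less_one prod_zero_iff finite_lessThan)
  qed
  ultimately show "v \<in> {v. set v \<subseteq> {e. site_ok e} \<and> length v \<le> length cert_table}"
    by simp
qed

lemma finite_test_fun_support: "finite {v. test_fun v \<noteq> 0}"
proof -
  have "{e. site_ok e} \<subseteq> {..7::nat} \<times> {..7::nat} \<times> {..7::nat} \<times> {..5::nat}"
    by (auto simp: site_ok_def)
  then have "finite {e. site_ok e}"
    by (rule finite_subset) auto
  then show ?thesis
    using test_fun_support_subset finite_lists_length_le finite_subset by blast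
qed

lemma test_fun_root: "0 < test_fun [(7, 0, 0, 0)]"
proof -
  have "nth_default 0 (row_values (cert_row 0) 7) 0 = 10052852"
    by code_simp
  then show ?thesis
    by (simp add: test_fun_def valid_state_def site_ok_def fan_of_def cert_value_def position_index_def)
qed

lemma return_prob_ge_cert_lambda: "\<exists>C>0. \<forall>n. (cert_lambda / 8) ^ (2 * n) * C \<le> return_prob (2 * n)"
proof (intro exI conjI allI)
  let ?v = "[(7, 0, 0, 0)]"
  let ?T = "\<Sum>y | test_fun y \<noteq> 0. test_fun y"
  have "test_fun ?v \<le> ?T"
    using test_fun_root finite_test_fun_support test_fun_nonneg by (intro member_le_sum) auto
  then show "0 < (test_fun ?v / ?T) ^ 2"
    using test_fun_root by simp
  have support: "{y. test_fun y \<noteq> 0} \<subseteq> {v. valid_state v}"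
    by (auto simp: test_fun_def split: if_splits)
  have superharmonic: "\<And>v. v \<in> {v. valid_state v}
      \<Longrightarrow> cert_lambda * test_fun v \<le> (\<Sum>s\<in>UNIV. test_fun (state_move v s))"
    using test_fun_superharmonic by simp
  have "?v \<in> {v. valid_state v}"
    by (simp add: valid_state_def site_ok_def fan_of_def)
  moreover have "0 \<le> cert_lambda"
    by (simp add: cert_lambda_def)
  ultimately show "(cert_lambda / 8) ^ (2 * n) * (test_fun ?v / ?T) ^ 2 \<le> return_prob (2 * n)" for n
    using fan_model.return_prob_ge_test_function[OF finite_test_fun_support test_fun_nonneg support _
        superharmonic _ test_fun_root] by blast
qed

theorem mainTheorem7:
  shows "ereal 0.6623 \<le> spectral_radius_J2"
proof -
  obtain C where "0 < C" and "\<And>n. (cert_lambda / 8) ^ (2 * n) * C \<le> return_prob (2 * n)"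
    using return_prob_ge_cert_lambda by blast
  then have "ereal (cert_lambda / 8) \<le> spectral_radius_J2"
    unfolding spectral_radius_J2_def by (intro limsup_root_ge) (simp_all add: cert_lambda_def)
  moreover have "0.6623 \<le> cert_lambda / 8"
    by (simp add: cert_lambda_def)
  ultimately show ?thesis
    by (metis ereal_less_eq(3) order_trans)
qed

end
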